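(* Let $1<p_0<\infty$, $\vec p=(p_1,\dots,p_n)$ with $1<p_i<\infty$, and $\frac{n}{p_0}<\sum_{i=1}^n\frac1{p_i}$. Let $f\in\mathcal{B}^{p_0'}_{\vec p\,'}(\mathbb{R}^n)$. Then $f$ can be written as $$f=\sum_{Q\in\mathcal D}\lambda_Q b_Q,$$ where each $\lambda_Q\ge0$ with $\sum_{Q\in\mathcal D}\lambda_Q\le 2\cdot 3^n\|f\|_{\mathcal{B}^{p_0'}_{\vec p\,'}(\mathbb{R}^n)}$, and each $b_Q$ is a $(p_0',\vec p\,')$-block associated with the cube $3Q$, i.e. $\operatorname{supp} b_Q\subset 3Q$ and $\|b_Q\|_{L^{\vec p\,'}(\mathbb{R}^n)}\le|3Q|^{\frac1{p_0}-\frac1n\sum_{i=1}^n\frac1{p_i}}$.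
   Context: $L^{\vec q}(\mathbb{R}^n)$ denotes the mixed-norm Lebesgue space with norm $\|f\|_{L^{\vec q}}=\big(\int_{\mathbb{R}}\cdots(\int_{\mathbb{R}}|f|^{q_1}dx_1)^{q_2/q_1}\cdots dx_n\big)^{1/q_n}$; $\vec p\,'=(p_1',\dots,p_n')$ with $1/p_i+1/p_i'=1$, and $p_0'$ is the conjugate of $p_0$. Cubes have sides parallel to the axes; $Q(x,r)$ is the open cube with center $x$ and side length $r$, and $cQ(x,r)=Q(x,cr)$. A measurable function $b$ is a $(p_0',\vec p\,')$-block if there is a cube $Q$ with $\operatorname{supp}b\subset Q$ and $\|b\|_{L^{\vec p\,'}(\mathbb{R}^n)}\le|Q|^{\frac1{p_0}-\frac1n\sum_{i=1}^n\frac1{p_i}}$. The block space $\mathcal{B}^{p_0'}_{\vec p\,'}(\mathbb{R}^n)$ consists of measurable functions $f=\sum_{i=1}^\infty\lambda_ib_i$ (series converging in $L^1_{\mathrm{loc}}$ and a.e.) with $\{\lambda_i\}\in\ell^1$ and each $b_i$ a $(p_0',\vec p\,')$-block, normed by $\|f\|_{\mathcal{B}^{p_0'}_{\vec p\,'}}=\inf\|\{\lambda_i\}\|_{\ell^1}$ over all such decompositions. $\mathcal D=\bigcup_{k\in\mathbb Z}\{2^{-k}(m+[0,1)^n):m\in\mathbb Z^n\}$ is the family of dyadic cubes. *)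

theory Defs
  imports "HOL-Analysis.Analysis"
begin

definition enn_powr :: "ennreal \<Rightarrow> real \<Rightarrow> ennreal" where
  "enn_powr e a = (if e = \<infinity> then \<infinity> else ennreal (enn2real e powr a))"

definition conj_exp :: "real \<Rightarrow> real" where
  "conj_exp p = p / (p - 1)"

definition coord_upd :: "real^'n \<Rightarrow> 'n \<Rightarrow> real \<Rightarrow> real^'n" where
  "coord_upd x i t = (\<chi> j. if j = i then t else x $ j)"

definition mixed_step :: "('n::finite \<Rightarrow> real) \<Rightarrow> 'n \<Rightarrow> (real^'n \<Rightarrow> ennreal) \<Rightarrow> (real^'n \<Rightarrow> ennreal)" where
  "mixed_step q i g = (\<lambda>x. enn_powr (\<integral>\<^sup>+ t. enn_powr (g (coord_upd x i t)) (q i) \<partial>lborel) (1 / q i))"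

text \<open>Mixed-norm Lebesgue norm: integrate first in the smallest coordinate
  (x_1), then the next one, ..., finally in the largest (x_n).  The result of
  the iteration no longer depends on the point, we evaluate it at 0.\<close>
definition mixed_norm :: "('n::{finite,linorder} \<Rightarrow> real) \<Rightarrow> (real^('n::{finite,linorder}) \<Rightarrow> real) \<Rightarrow> ennreal" where
  "mixed_norm q f =
     fold (mixed_step q) (sorted_list_of_set (UNIV :: 'n set)) (\<lambda>x. ennreal \<bar>f x\<bar>) 0"

definition open_cube :: "real^'n \<Rightarrow> real \<Rightarrow> (real^'n) set" where
  "open_cube c r = {y. \<forall>i. \<bar>y $ i - c $ i\<bar> < r / 2}"

definition block_exp :: "real \<Rightarrow> ('n::finite \<Rightarrow> real) \<Rightarrow> real" where
  "block_exp p0 p = 1 / p0 - (1 / real CARD('n)) * (\<Sum>i\<in>UNIV. 1 / p i)"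

definition block_on :: "real \<Rightarrow> ('n::{finite,linorder} \<Rightarrow> real) \<Rightarrow> (real^('n::{finite,linorder})) set \<Rightarrow> (real^('n::{finite,linorder}) \<Rightarrow> real) \<Rightarrow> bool" where
  "block_on p0 p Q b \<longleftrightarrow>
     b \<in> borel_measurable borel \<and>
     {x. b x \<noteq> 0} \<subseteq> Q \<and>
     mixed_norm (\<lambda>i. conj_exp (p i)) b \<le> ennreal (measure lborel Q powr block_exp p0 p)"

definition is_block :: "real \<Rightarrow> ('n::{finite,linorder} \<Rightarrow> real) \<Rightarrow> (real^('n::{finite,linorder}) \<Rightarrow> real) \<Rightarrow> bool" where
  "is_block p0 p b \<longleftrightarrow> (\<exists>c r. r > 0 \<and> block_on p0 p (open_cube c r) b)"

definition block_decomp :: "real \<Rightarrow> ('n::{finite,linorder} \<Rightarrow> real) \<Rightarrow> (real^('n::{finite,linorder}) \<Rightarrow> real)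
    \<Rightarrow> (nat \<Rightarrow> real) \<Rightarrow> (nat \<Rightarrow> real^('n::{finite,linorder}) \<Rightarrow> real) \<Rightarrow> bool" where
  "block_decomp p0 p f lam b \<longleftrightarrow>
     summable (\<lambda>i. \<bar>lam i\<bar>) \<and>
     (\<forall>i. is_block p0 p (b i)) \<and>
     (AE x in lborel. (\<lambda>N. \<Sum>i<N. lam i * b i x) \<longlonglongrightarrow> f x) \<and>
     (\<forall>K. compact K \<longrightarrow>
        (\<lambda>N. \<integral>\<^sup>+ x. indicator K x * ennreal \<bar>f x - (\<Sum>i<N. lam i * b i x)\<bar> \<partial>lborel) \<longlonglongrightarrow> 0)"

definition block_space :: "real \<Rightarrow> ('n::{finite,linorder} \<Rightarrow> real) \<Rightarrow> (real^('n::{finite,linorder}) \<Rightarrow> real) set" where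
  "block_space p0 p = {f. f \<in> borel_measurable borel \<and> (\<exists>lam b. block_decomp p0 p f lam b)}"

definition block_norm :: "real \<Rightarrow> ('n::{finite,linorder} \<Rightarrow> real) \<Rightarrow> (real^('n::{finite,linorder}) \<Rightarrow> real) \<Rightarrow> real" where
  "block_norm p0 p f = Inf {(\<Sum>i. \<bar>lam i\<bar>) | lam b. block_decomp p0 p f lam b}"

definition dyadic_cube :: "int \<Rightarrow> int^'n \<Rightarrow> (real^'n) set" where
  "dyadic_cube k m = {x. \<forall>i. 2 powr (- k) * of_int (m $ i) \<le> x $ i \<and>
                             x $ i < 2 powr (- k) * (of_int (m $ i) + 1)}"

definition dyadic_center :: "int \<Rightarrow> int^'n \<Rightarrow> real^'n" where
  "dyadic_center k m = (\<chi> i. 2 powr (- k) * (of_int (m $ i) + 1 / 2))"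

definition dyadic_cubes :: "(real^'n) set set" where
  "dyadic_cubes = {dyadic_cube k m | k m. True}"

end

theory Submission
  imports Defs
begin

text \<open>
  A block supported in a cube \<open>Q\<close> of side \<open>r\<close> is also supported in the concentric triple \<open>3Q'\<close>
  of a dyadic cube \<open>Q'\<close> of side \<open>l\<close> with \<open>l \<le> r < 2l\<close>. As the block exponent \<open>e\<close> lies in
  \<open>(-1, 0)\<close>, we have \<open>|Q|^e \<le> |Q'|^e = 3^(-ne) |3Q'|^e \<le> 3^n |3Q'|^e\<close>, so a block for \<open>Q\<close> is
  \<open>3^n\<close> times a block for \<open>3Q'\<close>. Grouping the terms of a decomposition \<open>f = \<Sum> \<lambda>_i b_i\<close> with
  \<open>\<Sum> |\<lambda>_i|\<close> less than twice the block norm of \<open>f\<close> by their dyadic cubes, and normalising each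
  group, gives one block per dyadic cube by Minkowski's inequality for series, applied in one
  variable at a time.

  The regrouping is legitimate because Hoelder's inequality, again one variable at a time, bounds
  the integral of \<open>|b|\<close> over a cube of side \<open>s\<close> by \<open>s^(n/p_0)\<close> for every block \<open>b\<close>; this is where
  \<open>n/p_0 < \<Sum> 1/p_i\<close> enters. Hence \<open>\<Sum> |\<lambda>_i b_i|\<close> is locally integrable and finite almost
  everywhere, and \<open>f = 0\<close> almost everywhere when its block norm vanishes.
\<close>

section \<open>Powers of extended nonnegative reals\<close>

lemma enn_powr_0 [simp]: "a > 0 \<Longrightarrow> enn_powr 0 a = 0"
  by (simp add: enn_powr_def)

lemma enn_powr_1 [simp]: "enn_powr x 1 = x"
  by (cases x) (auto simp: enn_powr_def)

lemma enn_powr_top [simp]: "enn_powr top a = top"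
  by (simp add: enn_powr_def)

lemma enn_powr_ennreal: "x \<ge> 0 \<Longrightarrow> enn_powr (ennreal x) a = ennreal (x powr a)"
  by (simp add: enn_powr_def)

lemma enn_powr_mono: "a \<ge> 0 \<Longrightarrow> x \<le> y \<Longrightarrow> enn_powr x a \<le> enn_powr y a"
  by (cases x; cases y) (auto simp: enn_powr_def powr_mono2 top_unique)

lemma borel_measurable_enn_powr [measurable]:
  assumes [measurable]: "g \<in> borel_measurable M"
  shows "(\<lambda>x. enn_powr (g x) a) \<in> borel_measurable M"
  unfolding enn_powr_def by measurable

lemma enn_powr_powr: "a > 0 \<Longrightarrow> b > 0 \<Longrightarrow> enn_powr (enn_powr x a) b = enn_powr x (a * b)"
  by (cases x) (auto simp: enn_powr_def powr_powr)

lemma enn_powr_powr_inverse: "a > 0 \<Longrightarrow> enn_powr (enn_powr x a) (1 / a) = x"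
  by (simp add: enn_powr_powr)

lemma enn_powr_inverse_powr: "a > 0 \<Longrightarrow> enn_powr (enn_powr x (1 / a)) a = x"
  by (simp add: enn_powr_powr)

lemma enn_powr_le_iff:
  assumes "a > 0"
  shows "enn_powr x a \<le> y \<longleftrightarrow> x \<le> enn_powr y (1 / a)"
proof
  assume "enn_powr x a \<le> y"
  then have "enn_powr (enn_powr x a) (1 / a) \<le> enn_powr y (1 / a)"
    using assms by (intro enn_powr_mono) auto
  then show "x \<le> enn_powr y (1 / a)"
    using assms by (simp add: enn_powr_powr_inverse)
next
  assume "x \<le> enn_powr y (1 / a)"
  then have "enn_powr x a \<le> enn_powr (enn_powr y (1 / a)) a"
    using assms by (intro enn_powr_mono) auto
  then show "enn_powr x a \<le> y"
    using assms by (simp add: enn_powr_inverse_powr)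
qed

lemma enn_powr_SUP:
  assumes "a > 0"
  shows "enn_powr (SUP i\<in>I. f i) a = (SUP i\<in>I. enn_powr (f i) a)"
proof (rule antisym)
  show "(SUP i\<in>I. enn_powr (f i) a) \<le> enn_powr (SUP i\<in>I. f i) a"
    using assms by (intro SUP_least enn_powr_mono) (auto intro: SUP_upper)
  have "(SUP i\<in>I. f i) \<le> enn_powr (SUP i\<in>I. enn_powr (f i) a) (1 / a)"
  proof (rule SUP_least)
    fix i assume "i \<in> I"
    then have "enn_powr (f i) a \<le> (SUP i\<in>I. enn_powr (f i) a)" by (rule SUP_upper)
    then show "f i \<le> enn_powr (SUP i\<in>I. enn_powr (f i) a) (1 / a)"
      using enn_powr_le_iff[OF assms] by blast
  qed
  then show "enn_powr (SUP i\<in>I. f i) a \<le> (SUP i\<in>I. enn_powr (f i) a)"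
    using enn_powr_le_iff[OF assms] by blast
qed

lemma enn_powr_mult: "a > 0 \<Longrightarrow> enn_powr (x * y) a = enn_powr x a * enn_powr y a"
  by (cases x; cases y)
     (auto simp: enn_powr_def ennreal_mult_top ennreal_top_mult powr_mult simp flip: ennreal_mult)

lemma enn_powr_eq_0_iff: "a > 0 \<Longrightarrow> enn_powr x a = 0 \<longleftrightarrow> x = 0"
  by (cases x) (auto simp: enn_powr_def)

section \<open>Lebesgue integrals as iterated one-dimensional integrals\<close>

lemma continuous_on_coord_upd: "continuous_on UNIV (\<lambda>(x, t). coord_upd (x::real^'n) i t)"
  unfolding coord_upd_def case_prod_unfold
proof (intro continuous_on_vec_lambda)
  fix j
  show "continuous_on UNIV (\<lambda>z. if j = i then snd z else fst z $ j)"
    by (cases "j = i") (auto intro!: continuous_intros)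
qed

lemma measurable_coord_upd [measurable]:
  "(\<lambda>(x, t). coord_upd (x::real^'n) i t) \<in> measurable (borel \<Otimes>\<^sub>M lborel) borel"
proof -
  have "(\<lambda>(x, t). coord_upd (x::real^'n) i t) \<in> measurable (borel \<Otimes>\<^sub>M borel) borel"
    unfolding borel_prod by (rule borel_measurable_continuous_onI[OF continuous_on_coord_upd])
  moreover have "sets (borel \<Otimes>\<^sub>M lborel) = sets (borel \<Otimes>\<^sub>M (borel::real measure))"
    by (intro sets_pair_measure_cong) auto
  ultimately show ?thesis
    by (subst measurable_cong_sets[OF _ refl]) auto
qed

lemma borel_measurable_coord_line [measurable]:
  assumes "g \<in> borel_measurable (borel :: (real^'n) measure)"
  shows "(\<lambda>t. g (coord_upd x i t)) \<in> borel_measurable lborel"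
proof -
  have "(\<lambda>t. (x, t)) \<in> measurable lborel (borel \<Otimes>\<^sub>M lborel)"
    by measurable
  from measurable_compose[OF measurable_compose[OF this measurable_coord_upd] assms]
  show ?thesis by simp
qed

lemma borel_measurable_mixed_step [measurable]:
  assumes [measurable]: "g \<in> borel_measurable (borel :: (real^'n) measure)"
  shows "mixed_step q i g \<in> borel_measurable borel"
proof -
  have "(\<lambda>(x, t). enn_powr (g (coord_upd (x::real^'n) i t)) (q i))
      \<in> borel_measurable (borel \<Otimes>\<^sub>M lborel)"
    using measurable_compose[OF measurable_coord_upd assms] by measurable
  then have "(\<lambda>x. \<integral>\<^sup>+ t. enn_powr (g (coord_upd (x::real^'n) i t)) (q i) \<partial>lborel)
      \<in> borel_measurable borel"
    by (rule lborel.borel_measurable_nn_integral[of "\<lambda>x t. _ x t"])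
  then show ?thesis unfolding mixed_step_def by measurable
qed

lemma borel_measurable_fold_mixed_step [measurable]:
  "G \<in> borel_measurable (borel :: (real^'n) measure) \<Longrightarrow>
    fold (mixed_step q) xs G \<in> borel_measurable borel"
  by (induction xs arbitrary: G) auto

lemma mixed_step_one: "mixed_step (\<lambda>_. 1) i G = (\<lambda>x. \<integral>\<^sup>+ t. G (coord_upd x i t) \<partial>lborel)"
  by (simp add: mixed_step_def)

definition integrate_coord :: "'b \<Rightarrow> (('b \<Rightarrow> real) \<Rightarrow> ennreal) \<Rightarrow> ('b \<Rightarrow> real) \<Rightarrow> ennreal" where
  "integrate_coord b H = (\<lambda>w. \<integral>\<^sup>+ y. H (w(b := y)) \<partial>lborel)"

lemma borel_measurable_integrate_coord:
  assumes "b \<notin> I" and H: "H \<in> borel_measurable (PiM (insert b I) (\<lambda>_. lborel))"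
  shows "integrate_coord b H \<in> borel_measurable (PiM I (\<lambda>_. lborel))"
proof -
  have "(\<lambda>z. (fst z) (b := snd z))
      \<in> measurable (PiM I (\<lambda>_. lborel) \<Otimes>\<^sub>M lborel) (PiM (insert b I) (\<lambda>_. lborel))"
    by (rule measurable_fun_upd[where J=I]) auto
  from measurable_compose[OF this H]
  have "case_prod (\<lambda>w y. H (w(b := y))) \<in> borel_measurable (PiM I (\<lambda>_. lborel) \<Otimes>\<^sub>M lborel)"
    by (simp add: case_prod_unfold)
  then show ?thesis unfolding integrate_coord_def
    by (rule lborel.borel_measurable_nn_integral)
qed

lemma nn_integral_PiM_eq_fold_integrate_coord:
  assumes "distinct xs" "H \<in> borel_measurable (PiM (set xs) (\<lambda>_. lborel))"
  shows "integral\<^sup>N (PiM (set xs) (\<lambda>_. lborel)) H = fold integrate_coord xs H (\<lambda>_. undefined)"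
  using assms
proof (induction xs arbitrary: H)
  case Nil
  interpret product_sigma_finite "\<lambda>_. lborel" by standard
  show ?case by (simp add: nn_integral_empty)
next
  case (Cons y ys)
  interpret product_sigma_finite "\<lambda>_::'b. lborel" by standard
  have "integral\<^sup>N (PiM (set (y # ys)) (\<lambda>_. lborel)) H
      = integral\<^sup>N (PiM (set ys) (\<lambda>_. lborel)) (integrate_coord y H)"
    using Cons.prems by (simp add: product_nn_integral_insert integrate_coord_def)
  also have "\<dots> = fold integrate_coord ys (integrate_coord y H) (\<lambda>_. undefined)"
    using Cons.prems by (intro Cons.IH) (auto intro: borel_measurable_integrate_coord)
  finally show ?case by simp
qed

definition ignores_coords :: "'n set \<Rightarrow> (real^'n \<Rightarrow> 'a) \<Rightarrow> bool" where
  "ignores_coords S G \<longleftrightarrow> (\<forall>x y. (\<forall>j. j \<notin> S \<longrightarrow> x $ j = y $ j) \<longrightarrow> G x = G y)"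

lemma ignores_coords_mixed_step:
  fixes G :: "real^'n \<Rightarrow> ennreal"
  assumes G: "ignores_coords S G"
  shows "ignores_coords (insert a S) (mixed_step q a G)"
  unfolding ignores_coords_def
proof (intro allI impI)
  fix x y :: "real^'n"
  assume "\<forall>j. j \<notin> insert a S \<longrightarrow> x $ j = y $ j"
  then have "\<And>t. G (coord_upd x a t) = G (coord_upd y a t)"
    using G by (auto simp: ignores_coords_def coord_upd_def)
  then show "mixed_step q a G x = mixed_step q a G y"
    by (simp add: mixed_step_def)
qed

lemma ignores_coords_fold_mixed_step:
  fixes G :: "real^'n \<Rightarrow> ennreal"
  shows "ignores_coords S G \<Longrightarrow> ignores_coords (S \<union> set xs) (fold (mixed_step q) xs G)"
proof (induction xs arbitrary: S G)
  case Nil then show ?case by simp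
next
  case (Cons a xs)
  from Cons.IH[OF ignores_coords_mixed_step[OF Cons.prems]] show ?case by simp
qed

lemma fold_mixed_step_UNIV_const:
  fixes G :: "real^'n::{finite,linorder} \<Rightarrow> ennreal"
  shows "fold (mixed_step q) (sorted_list_of_set UNIV) G x
       = fold (mixed_step q) (sorted_list_of_set UNIV) G y"
proof -
  have "ignores_coords {} G" unfolding ignores_coords_def
    by (metis empty_iff vec_eq_iff)
  from ignores_coords_fold_mixed_step[OF this, where q=q and xs="sorted_list_of_set UNIV"]
  show ?thesis
    by (simp add: ignores_coords_def)
qed

text \<open>Through this map, \<open>lborel_eq\<close> presents Lebesgue measure on \<open>real^'n\<close> as the image of the
  product measure on the coordinate functions \<open>Basis \<rightarrow> real\<close>.\<close>

definition vec_of_coords :: "(real^'n \<Rightarrow> real) \<Rightarrow> real^'n" where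
  "vec_of_coords w = (\<Sum>b\<in>Basis. w b *\<^sub>R b)"

lemma vec_of_coords_nth: "vec_of_coords w $ j = w (axis j 1)"
proof -
  have "vec_of_coords w $ j = (\<Sum>b\<in>Basis. w b * (b \<bullet> axis j 1))"
    by (simp add: cart_eq_inner_axis vec_of_coords_def inner_sum_left)
  also have "\<dots> = (\<Sum>b\<in>Basis. if b = axis j 1 then w b else 0)"
    by (intro sum.cong) (auto simp: inner_Basis axis_in_Basis_iff)
  finally show ?thesis by (simp add: axis_in_Basis_iff)
qed

lemma vec_of_coords_upd: "vec_of_coords (w(axis i 1 := t)) = coord_upd (vec_of_coords w) i t"
  by (rule vec_eq_iff[THEN iffD2]) (simp add: vec_of_coords_nth coord_upd_def axis_eq_axis)

lemma measurable_vec_of_coords [measurable]: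
  "vec_of_coords \<in> measurable (PiM Basis (\<lambda>_. lborel)) (borel :: (real^'n) measure)"
  unfolding vec_of_coords_def by measurable

lemma fold_integrate_coord_vec_of_coords:
  fixes G :: "real^'n \<Rightarrow> ennreal"
  shows "fold integrate_coord (map (\<lambda>i. axis i 1) xs) (G \<circ> vec_of_coords)
       = fold (mixed_step (\<lambda>_. 1)) xs G \<circ> vec_of_coords"
proof (induction xs arbitrary: G)
  case Nil then show ?case by simp
next
  case (Cons a xs)
  have "integrate_coord (axis a 1) (G \<circ> vec_of_coords) = mixed_step (\<lambda>_. 1) a G \<circ> vec_of_coords"
    by (simp add: integrate_coord_def mixed_step_one fun_eq_iff vec_of_coords_upd)
  then show ?case
    using Cons.IH[of "mixed_step (\<lambda>_. 1) a G"] by (simp only: list.map fold_Cons comp_def)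
qed

lemma nn_integral_lborel_eq_fold_mixed_step:
  fixes g :: "real^'n::{finite,linorder} \<Rightarrow> ennreal"
  assumes [measurable]: "g \<in> borel_measurable borel"
  shows "integral\<^sup>N lborel g = fold (mixed_step (\<lambda>_. 1)) (sorted_list_of_set UNIV) g x"
proof -
  let ?xs = "sorted_list_of_set (UNIV :: 'n set)"
  let ?ys = "map (\<lambda>i. axis i (1::real)) ?xs"
  have "distinct ?ys"
    by (simp add: distinct_map inj_on_def axis_eq_axis)
  moreover have "set ?ys = Basis"
    by (auto simp: Basis_vec_def)
  ultimately have "integral\<^sup>N (PiM Basis (\<lambda>_. lborel)) (g \<circ> vec_of_coords)
      = fold integrate_coord ?ys (g \<circ> vec_of_coords) (\<lambda>_. undefined)"
    using nn_integral_PiM_eq_fold_integrate_coord[of ?ys "g \<circ> vec_of_coords"] by simp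
  moreover have "integral\<^sup>N lborel g = integral\<^sup>N (PiM Basis (\<lambda>_. lborel)) (g \<circ> vec_of_coords)"
    by (subst lborel_eq) (simp add: nn_integral_distr vec_of_coords_def[abs_def] comp_def)
  ultimately show ?thesis
    using fold_mixed_step_UNIV_const by (simp add: fold_integrate_coord_vec_of_coords)
qed

section \<open>The one-dimensional \<open>L\<^sup>q\<close> norm\<close>

definition line_norm :: "real \<Rightarrow> (real \<Rightarrow> ennreal) \<Rightarrow> ennreal" where
  "line_norm q u = enn_powr (\<integral>\<^sup>+ t. enn_powr (u t) q \<partial>lborel) (1 / q)"

lemma mixed_step_eq_line_norm: "mixed_step q i g x = line_norm (q i) (\<lambda>t. g (coord_upd x i t))"
  by (simp add: mixed_step_def line_norm_def)

lemma line_norm_mono: "q > 0 \<Longrightarrow> (\<And>t. u t \<le> v t) \<Longrightarrow> line_norm q u \<le> line_norm q v"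
  unfolding line_norm_def by (intro enn_powr_mono nn_integral_mono) auto

lemma line_norm_zero [simp]: "q > 0 \<Longrightarrow> line_norm q (\<lambda>_. 0) = 0"
  by (simp add: line_norm_def)

lemma line_norm_cmult:
  assumes "q > 0" and [measurable]: "u \<in> borel_measurable lborel"
  shows "line_norm q (\<lambda>t. c * u t) = c * line_norm q u"
proof -
  have "line_norm q (\<lambda>t. c * u t)
      = enn_powr (\<integral>\<^sup>+ t. enn_powr c q * enn_powr (u t) q \<partial>lborel) (1 / q)"
    using assms by (simp add: line_norm_def enn_powr_mult)
  also have "\<dots> = enn_powr (enn_powr c q * (\<integral>\<^sup>+ t. enn_powr (u t) q \<partial>lborel)) (1 / q)"
    by (subst nn_integral_cmult) auto
  also have "\<dots> = c * line_norm q u"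
    using assms by (simp add: enn_powr_mult enn_powr_powr_inverse line_norm_def)
  finally show ?thesis .
qed

lemma AE_zero_if_line_norm_eq_0:
  assumes "q > 0" and [measurable]: "u \<in> borel_measurable lborel" and "line_norm q u = 0"
  shows "AE t in lborel. u t = 0"
proof -
  have "(\<integral>\<^sup>+ t. enn_powr (u t) q \<partial>lborel) = 0"
    using assms by (simp add: line_norm_def enn_powr_eq_0_iff)
  then have "AE t in lborel. enn_powr (u t) q = 0"
    by (subst (asm) nn_integral_0_iff_AE) auto
  then show ?thesis using assms by (simp add: enn_powr_eq_0_iff)
qed

lemma nn_integral_powr_eq_line_norm:
  assumes "q > 0" "line_norm q u = ennreal a" "a \<ge> 0"
  shows "(\<integral>\<^sup>+ t. enn_powr (u t) q \<partial>lborel) = ennreal (a powr q)"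
  using assms enn_powr_inverse_powr[of q "\<integral>\<^sup>+ t. enn_powr (u t) q \<partial>lborel"]
  by (simp add: line_norm_def enn_powr_ennreal)

lemma powr_convex_combination_le:
  fixes X Y a q :: real
  assumes "X \<ge> 0" "Y \<ge> 0" "0 \<le> a" "a \<le> 1" "q \<ge> 1"
  shows "(a * X + (1 - a) * Y) powr q \<le> a * X powr q + (1 - a) * Y powr q"
proof (cases "X > 0 \<and> Y > 0")
  case True
  from convex_onD[OF powr_convex[OF assms(5)], of "1 - a" X Y] True assms
  show ?thesis by (simp add: algebra_simps)
next
  case False
  have "a powr q \<le> a" "(1 - a) powr q \<le> 1 - a"
    using assms powr_mono'[of 1 q a] powr_mono'[of 1 q "1 - a"] by auto
  then have "a powr q * X powr q \<le> a * X powr q" "(1 - a) powr q * Y powr q \<le> (1 - a) * Y powr q"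
    by (auto intro: mult_right_mono)
  with False assms show ?thesis
    by (cases "X = 0") (auto simp: powr_mult)
qed

text \<open>The weights \<open>A, B\<close> will be the norms of the two summands in Minkowski's inequality.\<close>

lemma powr_add_le_weighted:
  fixes x y A B q :: real
  assumes "x \<ge> 0" "y \<ge> 0" "A > 0" "B > 0" "q \<ge> 1"
  shows "(x + y) powr q
    \<le> (A + B) powr (q - 1) * (x powr q * A powr (1 - q) + y powr q * B powr (1 - q))"
proof -
  define a where "a = A / (A + B)"
  have a: "0 \<le> a" "a \<le> 1" "1 - a = B / (A + B)" using assms by (auto simp: a_def field_simps)
  have "(A + B) * (a * (x / A)) = x" "(A + B) * ((1 - a) * (y / B)) = y"
    using assms unfolding a(3) by (simp_all add: a_def)
  then have "x + y = (A + B) * (a * (x / A) + (1 - a) * (y / B))"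
    by (simp add: distrib_left)
  then have "(x + y) powr q = (A + B) powr q * (a * (x / A) + (1 - a) * (y / B)) powr q"
    using assms a by (simp add: powr_mult)
  also have "\<dots> \<le> (A + B) powr q * (a * (x / A) powr q + (1 - a) * (y / B) powr q)"
    using assms a by (intro mult_left_mono powr_convex_combination_le) auto
  also have "\<dots> = (A + B) powr (q - 1) * (x powr q * A powr (1 - q) + y powr q * B powr (1 - q))"
  proof -
    have cancel: "(C * S) * ((W / S) * (X / P)) = C * (X * (W / P))" if "S \<noteq> 0" for C S W X P :: real
      using that by (simp add: field_simps)
    have AB: "(A + B) powr q = (A + B) powr (q - 1) * (A + B)"
      using assms by (simp add: powr_diff)
    have "A + B \<noteq> 0" "A powr q \<noteq> 0" "B powr q \<noteq> 0"
      using assms by auto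
    then have "(A + B) powr q * (a * (x / A) powr q)
        = (A + B) powr (q - 1) * (x powr q * (A / A powr q))"
      "(A + B) powr q * ((1 - a) * (y / B) powr q)
        = (A + B) powr (q - 1) * (y powr q * (B / B powr q))"
      using assms unfolding AB a(3) by (simp_all add: a_def powr_divide cancel)
    moreover have "A / A powr q = A powr (1 - q)" "B / B powr q = B powr (1 - q)"
      using assms by (simp_all add: powr_diff)
    ultimately show ?thesis by (simp add: distrib_left)
  qed
  finally show ?thesis .
qed

lemma enn_powr_add_le_weighted:
  fixes x y :: ennreal and A B q :: real
  assumes "A > 0" "B > 0" "q \<ge> 1"
  shows "enn_powr (x + y) q \<le> ennreal ((A + B) powr (q - 1)) *
    (enn_powr x q * ennreal (A powr (1 - q)) + enn_powr y q * ennreal (B powr (1 - q)))"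
proof (cases "x = \<infinity> \<or> y = \<infinity>")
  case True
  have "ennreal ((A + B) powr (q - 1)) > 0" "ennreal (A powr (1 - q)) > 0" "ennreal (B powr (1 - q)) > 0"
    using assms by auto
  with True have "ennreal ((A + B) powr (q - 1)) *
      (enn_powr x q * ennreal (A powr (1 - q)) + enn_powr y q * ennreal (B powr (1 - q))) = \<infinity>"
    by (auto simp: ennreal_mult_eq_top_iff)
  then show ?thesis by simp
next
  case False
  then obtain r s where r: "x = ennreal r" "r \<ge> 0" and s: "y = ennreal s" "s \<ge> 0"
    by (cases x; cases y) auto
  have "enn_powr (x + y) q = ennreal ((r + s) powr q)"
    using r s by (simp add: enn_powr_ennreal flip: ennreal_plus)
  moreover have "ennreal ((A + B) powr (q - 1)) *
      (enn_powr x q * ennreal (A powr (1 - q)) + enn_powr y q * ennreal (B powr (1 - q)))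
    = ennreal ((A + B) powr (q - 1) * (r powr q * A powr (1 - q) + s powr q * B powr (1 - q)))"
    using r s assms by (simp add: enn_powr_ennreal ennreal_mult' ennreal_plus)
  ultimately show ?thesis
    using powr_add_le_weighted[of r s A B q] r s assms by (simp add: ennreal_leI)
qed

lemma line_norm_add_le_finite:
  assumes q: "q \<ge> 1" and [measurable]: "u \<in> borel_measurable lborel" "v \<in> borel_measurable lborel"
    and a: "line_norm q u = ennreal a" "a > 0" and b: "line_norm q v = ennreal b" "b > 0"
  shows "line_norm q (\<lambda>t. u t + v t) \<le> ennreal (a + b)"
proof -
  have q0: "q > 0" using q by simp
  have "(\<integral>\<^sup>+ t. enn_powr (u t + v t) q \<partial>lborel)
     \<le> (\<integral>\<^sup>+ t. ennreal ((a + b) powr (q - 1)) * (enn_powr (u t) q * ennreal (a powr (1 - q))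
          + enn_powr (v t) q * ennreal (b powr (1 - q))) \<partial>lborel)"
    using a b q by (intro nn_integral_mono enn_powr_add_le_weighted) auto
  also have "\<dots> = ennreal ((a + b) powr (q - 1)) *
      ((\<integral>\<^sup>+ t. enn_powr (u t) q \<partial>lborel) * ennreal (a powr (1 - q)) +
       (\<integral>\<^sup>+ t. enn_powr (v t) q \<partial>lborel) * ennreal (b powr (1 - q)))"
    by (simp add: nn_integral_cmult nn_integral_add nn_integral_multc)
  also have "\<dots> = ennreal ((a + b) powr (q - 1) * (a powr q * a powr (1 - q) + b powr q * b powr (1 - q)))"
    using a b q0
    by (simp add: nn_integral_powr_eq_line_norm flip: ennreal_mult ennreal_plus del: ennreal_plus)
  also have "(a + b) powr (q - 1) * (a powr q * a powr (1 - q) + b powr q * b powr (1 - q))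
      = (a + b) powr q"
    using a b by (simp add: powr_diff flip: powr_add)
  finally have "(\<integral>\<^sup>+ t. enn_powr (u t + v t) q \<partial>lborel) \<le> ennreal ((a + b) powr q)" .
  then have "line_norm q (\<lambda>t. u t + v t) \<le> enn_powr (ennreal ((a + b) powr q)) (1 / q)"
    unfolding line_norm_def using q0 by (intro enn_powr_mono) auto
  also have "\<dots> = ennreal (a + b)"
    using a b q0 by (simp add: enn_powr_ennreal powr_powr)
  finally show ?thesis .
qed

lemma line_norm_add_eq_if_line_norm_eq_0:
  assumes "q > 0" and [measurable]: "u \<in> borel_measurable lborel" and "line_norm q u = 0"
  shows "line_norm q (\<lambda>t. u t + v t) = line_norm q v"
proof -
  have "AE t in lborel. u t = 0"
    using assms by (intro AE_zero_if_line_norm_eq_0) auto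
  then have "(\<integral>\<^sup>+ t. enn_powr (u t + v t) q \<partial>lborel) = (\<integral>\<^sup>+ t. enn_powr (v t) q \<partial>lborel)"
    by (intro nn_integral_cong_AE) auto
  then show ?thesis by (simp add: line_norm_def)
qed

lemma line_norm_add_le:
  assumes q: "q \<ge> 1" and [measurable]: "u \<in> borel_measurable lborel" "v \<in> borel_measurable lborel"
  shows "line_norm q (\<lambda>t. u t + v t) \<le> line_norm q u + line_norm q v"
proof (cases "line_norm q u = 0 \<or> line_norm q v = 0")
  case True
  then show ?thesis
    using q line_norm_add_eq_if_line_norm_eq_0[of q u v] line_norm_add_eq_if_line_norm_eq_0[of q v u]
    by (auto simp: add.commute)
next
  case False
  show ?thesis
  proof (cases "line_norm q u"; cases "line_norm q v")
    fix a b assume "line_norm q u = ennreal a" "0 \<le> a" "line_norm q v = ennreal b" "0 \<le> b"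
    with False line_norm_add_le_finite[OF assms, of a b] show ?thesis
      by force
  qed auto
qed

lemma line_norm_sum_le:
  fixes m :: nat
  assumes q: "q \<ge> 1" and [measurable]: "\<And>k. u k \<in> borel_measurable lborel"
  shows "line_norm q (\<lambda>t. \<Sum>k<m. u k t) \<le> (\<Sum>k<m. line_norm q (u k))"
proof (induction m)
  case 0 then show ?case using q by simp
next
  case (Suc m)
  have "line_norm q (\<lambda>t. \<Sum>k<Suc m. u k t) \<le> line_norm q (\<lambda>t. \<Sum>k<m. u k t) + line_norm q (u m)"
    using q by (simp add: line_norm_add_le)
  with Suc show ?case
    by (simp add: add_right_mono order_trans)
qed

lemma line_norm_suminf_le:
  assumes q: "q \<ge> 1" and [measurable]: "\<And>k. u k \<in> borel_measurable lborel"
  shows "line_norm q (\<lambda>t. \<Sum>k. u k t) \<le> (\<Sum>k. line_norm q (u k))"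
proof -
  have q0: "q > 0" using q by simp
  have inc: "incseq (\<lambda>m t. enn_powr (\<Sum>k<m. u k t) q)"
    using q0 by (intro incseq_SucI le_funI enn_powr_mono) auto
  have "line_norm q (\<lambda>t. \<Sum>k. u k t)
      = enn_powr (\<integral>\<^sup>+ t. (SUP m. enn_powr (\<Sum>k<m. u k t) q) \<partial>lborel) (1 / q)"
    unfolding line_norm_def suminf_eq_SUP using q0 by (simp add: enn_powr_SUP)
  also have "\<dots> = enn_powr (SUP m. \<integral>\<^sup>+ t. enn_powr (\<Sum>k<m. u k t) q \<partial>lborel) (1 / q)"
    using inc by (subst nn_integral_monotone_convergence_SUP) auto
  also have "\<dots> = (SUP m. line_norm q (\<lambda>t. \<Sum>k<m. u k t))"
    using q0 by (simp add: enn_powr_SUP line_norm_def)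
  also have "\<dots> \<le> (SUP m. \<Sum>k<m. line_norm q (u k))"
  proof (rule SUP_mono)
    fix m :: nat
    show "\<exists>m'\<in>UNIV. line_norm q (\<lambda>t. \<Sum>k<m. u k t) \<le> (\<Sum>k<m'. line_norm q (u k))"
      using line_norm_sum_le[of q u m, OF assms] by blast
  qed
  also have "\<dots> = (\<Sum>k. line_norm q (u k))"
    by (simp add: suminf_eq_SUP)
  finally show ?thesis .
qed

lemma conj_exp_gt_1: "p > 1 \<Longrightarrow> conj_exp p > 1"
  by (simp add: conj_exp_def)

lemma conj_exp_pos: "p > 1 \<Longrightarrow> conj_exp p > 0"
  by (simp add: conj_exp_def)

lemma young_scaled:
  fixes x a L p q :: real
  assumes "p > 1" "q = p / (p - 1)" "x \<ge> 0" "a > 0" "L > 0"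
  shows "x \<le> (a * L powr (1/p) * a powr (- q) / q) * x powr q + a * L powr (1/p) / (L * p)"
proof -
  have "1/q = (p - 1) / p" using assms by simp
  then have q: "q > 1" "1/q + 1/p = 1"
    using assms by (auto simp: diff_divide_distrib)
  have "(x / a) * L powr (-1/p) \<le> (x / a) powr q / q + (L powr (-1/p)) powr p / p"
    using Youngs_inequality[of q p "x / a" "L powr (-1/p)"] q assms by auto
  also have "(L powr (-1/p)) powr p = 1 / L"
  proof -
    have "(L powr (-1/p)) powr p = L powr (-1/p * p)" by (rule powr_powr)
    also have "-1/p * p = -1" using assms by simp
    finally show ?thesis using assms by (simp add: powr_minus divide_inverse)
  qed
  also have "(x / a) powr q = x powr q * a powr (- q)"
    using assms by (simp add: powr_divide powr_minus_divide)
  finally have young: "(x / a) * L powr (-1/p) \<le> x powr q * a powr (- q) / q + 1 / L / p" .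
  have "x = (a * L powr (1/p)) * ((x / a) * L powr (-1/p))"
    using assms by (simp add: powr_minus_divide)
  also have "\<dots> \<le> (a * L powr (1/p)) * (x powr q * a powr (- q) / q + 1 / L / p)"
    using young assms by (intro mult_left_mono) auto
  also have "\<dots> = (a * L powr (1/p) * a powr (- q) / q) * x powr q + a * L powr (1/p) / (L * p)"
    by (simp add: field_simps)
  finally show ?thesis .
qed

text \<open>Hoelder's inequality against the indicator of \<open>S\<close>, proved through Young's inequality
  applied pointwise after normalising \<open>u\<close> by its norm \<open>a\<close>.\<close>

lemma nn_integral_le_line_norm_finite:
  fixes u :: "real \<Rightarrow> ennreal"
  assumes p: "p > 1" and [measurable]: "u \<in> borel_measurable lborel" "S \<in> sets lborel"
    and SL: "emeasure lborel S \<le> ennreal L" and L: "L > 0"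
    and supp: "\<And>t. t \<notin> S \<Longrightarrow> u t = 0"
    and a: "line_norm (conj_exp p) u = ennreal a" "a > 0"
  shows "integral\<^sup>N lborel u \<le> ennreal (L powr (1/p) * a)"
proof -
  define q where "q = conj_exp p"
  have q: "q = p / (p - 1)" "q > 0" "1/q + 1/p = 1"
    using p by (auto simp: q_def conj_exp_def field_simps)
  define c1 where "c1 = a * L powr (1/p) * a powr (- q) / q"
  define c2 where "c2 = a * L powr (1/p) / (L * p)"
  have c: "c1 > 0" "c2 \<ge> 0" using a L p q by (auto simp: c1_def c2_def)
  have pointwise: "u t \<le> ennreal c1 * enn_powr (u t) q + ennreal c2 * indicator S t" for t
  proof (cases "t \<in> S"; cases "u t")
    fix r assume "t \<in> S" "u t = ennreal r" "0 \<le> r"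
    moreover have "r \<le> c1 * r powr q + c2"
      unfolding c1_def c2_def using young_scaled[OF p q(1) _ _ L, of r a] a \<open>0 \<le> r\<close> by simp
    ultimately show ?thesis using c
      by (simp add: enn_powr_ennreal ennreal_leI flip: ennreal_mult ennreal_plus)
  qed (use supp c in \<open>auto simp: ennreal_mult_eq_top_iff\<close>)
  have "integral\<^sup>N lborel u
      \<le> (\<integral>\<^sup>+ t. ennreal c1 * enn_powr (u t) q + ennreal c2 * indicator S t \<partial>lborel)"
    by (intro nn_integral_mono pointwise)
  also have "\<dots> = ennreal c1 * ennreal (a powr q) + ennreal c2 * emeasure lborel S"
    using a q \<open>S \<in> sets lborel\<close> by (simp add: nn_integral_add nn_integral_cmult q_def
        nn_integral_powr_eq_line_norm nn_integral_indicator)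
  also have "\<dots> \<le> ennreal c1 * ennreal (a powr q) + ennreal c2 * ennreal L"
    by (intro add_left_mono mult_left_mono SL) auto
  also have "\<dots> = ennreal (c1 * a powr q + c2 * L)"
    using c L by (simp add: ennreal_mult ennreal_plus)
  also have "c1 * a powr q + c2 * L = L powr (1/p) * a * (1/q + 1/p)"
    using a L p by (simp add: c1_def c2_def powr_minus field_simps)
  finally show ?thesis using q by simp
qed

lemma nn_integral_le_line_norm:
  fixes u :: "real \<Rightarrow> ennreal"
  assumes p: "p > 1" and [measurable]: "u \<in> borel_measurable lborel" "S \<in> sets lborel"
    and "emeasure lborel S \<le> ennreal L" "L > 0" "\<And>t. t \<notin> S \<Longrightarrow> u t = 0"
  shows "integral\<^sup>N lborel u \<le> ennreal (L powr (1/p)) * line_norm (conj_exp p) u"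
proof -
  have q: "conj_exp p > 0" using p by (rule conj_exp_pos)
  consider "line_norm (conj_exp p) u = \<infinity>" | "line_norm (conj_exp p) u = 0"
    | a where "line_norm (conj_exp p) u = ennreal a" "a > 0"
    by (cases "line_norm (conj_exp p) u") (auto simp: le_less)
  then show ?thesis
  proof cases
    case 1 then show ?thesis using \<open>L > 0\<close> by simp
  next
    case 2
    then have "AE t in lborel. u t = 0" using q by (intro AE_zero_if_line_norm_eq_0) auto
    then have "integral\<^sup>N lborel u = 0" by (simp add: nn_integral_0_iff_AE)
    then show ?thesis by simp
  next
    case 3
    with nn_integral_le_line_norm_finite[OF assms 3] show ?thesis
      by (simp add: ennreal_mult)
  qed
qed

section \<open>Properties of the mixed norm\<close>

lemma fold_mixed_step_mono:
  assumes "\<And>j. q j > 0" "\<And>x. G x \<le> H x"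
  shows "fold (mixed_step q) xs G x \<le> fold (mixed_step q) xs H x"
  using assms(2)
proof (induction xs arbitrary: G H x)
  case Nil then show ?case by simp
next
  case (Cons a xs)
  have "\<And>x. mixed_step q a G x \<le> mixed_step q a H x"
    unfolding mixed_step_eq_line_norm using assms(1) Cons.prems by (intro line_norm_mono) auto
  then show ?case using Cons.IH by simp
qed

lemma mixed_norm_mono:
  "(\<And>j. q j > 0) \<Longrightarrow> (\<And>x. \<bar>f x\<bar> \<le> \<bar>g x\<bar>) \<Longrightarrow> mixed_norm q f \<le> mixed_norm q g"
  unfolding mixed_norm_def by (intro fold_mixed_step_mono) auto

lemma fold_mixed_step_suminf_le:
  fixes g :: "nat \<Rightarrow> real^'n \<Rightarrow> ennreal"
  assumes q: "\<And>j. q j \<ge> 1" and g: "\<And>k. g k \<in> borel_measurable borel"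
  shows "fold (mixed_step q) xs (\<lambda>x. \<Sum>k. g k x) x \<le> (\<Sum>k. fold (mixed_step q) xs (g k) x)"
  using g
proof (induction xs arbitrary: g x)
  case Nil then show ?case by simp
next
  case (Cons a xs)
  note [measurable] = Cons.prems
  have q0: "\<And>j. q j > 0" using q by (metis less_le_trans zero_less_one)
  have "\<And>x. mixed_step q a (\<lambda>x. \<Sum>k. g k x) x \<le> (\<Sum>k. mixed_step q a (g k) x)"
    unfolding mixed_step_eq_line_norm using q by (intro line_norm_suminf_le) auto
  then have "fold (mixed_step q) xs (mixed_step q a (\<lambda>x. \<Sum>k. g k x)) x
      \<le> fold (mixed_step q) xs (\<lambda>x. \<Sum>k. mixed_step q a (g k) x) x"
    by (intro fold_mixed_step_mono q0)
  also have "\<dots> \<le> (\<Sum>k. fold (mixed_step q) xs (mixed_step q a (g k)) x)"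
    by (intro Cons.IH) auto
  finally show ?case by simp
qed

lemma fold_mixed_step_cmult:
  assumes "\<And>j. q j > 0" and "G \<in> borel_measurable (borel :: (real^'n) measure)"
  shows "fold (mixed_step q) xs (\<lambda>x. c * G x) x = c * fold (mixed_step q) xs G x"
  using assms(2)
proof (induction xs arbitrary: G x)
  case Nil then show ?case by simp
next
  case (Cons a xs)
  note [measurable] = Cons.prems
  have "mixed_step q a (\<lambda>x. c * G x) = (\<lambda>x. c * mixed_step q a G x)"
    unfolding mixed_step_eq_line_norm using assms(1) by (intro ext line_norm_cmult) auto
  then show ?case using Cons.IH[of "mixed_step q a G"] by simp
qed

lemma mixed_norm_zero:
  fixes q :: "'n::{finite,linorder} \<Rightarrow> real"
  assumes "\<And>j. q j > 0"
  shows "mixed_norm q (\<lambda>_. 0) = 0"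
proof -
  have "mixed_step q i (\<lambda>_. 0) = (\<lambda>_. 0)" for i
    using assms by (simp add: mixed_step_eq_line_norm fun_eq_iff)
  then have "fold (mixed_step q) xs (\<lambda>_. 0) = (\<lambda>_. 0)" for xs
    by (induction xs) auto
  then show ?thesis by (simp add: mixed_norm_def)
qed

lemma fold_mixed_step_holder:
  fixes G :: "real^'n \<Rightarrow> ennreal"
  assumes p: "\<And>j. p j > 1" and "distinct xs" and G: "G \<in> borel_measurable borel"
    and S: "\<And>j. S j \<in> sets lborel" "\<And>j. emeasure lborel (S j) \<le> ennreal (L j)" "\<And>j. L j > 0"
    and supp: "\<And>x. (\<exists>j\<in>set xs. x $ j \<notin> S j) \<Longrightarrow> G x = 0"
  shows "fold (mixed_step (\<lambda>_. 1)) xs G x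
    \<le> ennreal (\<Prod>j\<in>set xs. L j powr (1 / p j)) * fold (mixed_step (\<lambda>j. conj_exp (p j))) xs G x"
  using assms(2,3) supp
proof (induction xs arbitrary: G x)
  case Nil then show ?case by simp
next
  case (Cons a xs)
  note [measurable] = Cons.prems(2)
  let ?q = "\<lambda>j. conj_exp (p j)"
  let ?c = "L a powr (1 / p a)"
  have q: "\<And>j. ?q j > 0" using p by (rule conj_exp_pos)
  have "mixed_step (\<lambda>_. 1) a G y \<le> ennreal ?c * mixed_step ?q a G y" for y
  proof -
    have "G (coord_upd y a t) = 0" if "t \<notin> S a" for t
      using Cons.prems(3) that by (auto simp: coord_upd_def)
    then show ?thesis
      unfolding mixed_step_one mixed_step_eq_line_norm
      by (intro nn_integral_le_line_norm[OF p _ S]) auto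
  qed
  then have "fold (mixed_step (\<lambda>_. 1)) (a # xs) G x
      \<le> fold (mixed_step (\<lambda>_. 1)) xs (\<lambda>y. ennreal ?c * mixed_step ?q a G y) x"
    by (simp add: fold_mixed_step_mono)
  also have "\<dots> = ennreal ?c * fold (mixed_step (\<lambda>_. 1)) xs (mixed_step ?q a G) x"
    by (intro fold_mixed_step_cmult) auto
  also have "\<dots> \<le> ennreal ?c * (ennreal (\<Prod>j\<in>set xs. L j powr (1 / p j))
      * fold (mixed_step ?q) xs (mixed_step ?q a G) x)"
  proof (intro mult_left_mono Cons.IH)
    fix y assume "\<exists>j\<in>set xs. y $ j \<notin> S j"
    then obtain j where j: "j \<in> set xs" "y $ j \<notin> S j" by blast
    with Cons.prems(1) have "j \<noteq> a" by auto
    with j have "\<And>t. G (coord_upd y a t) = 0"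
      by (intro Cons.prems(3)) (auto simp: coord_upd_def intro!: bexI[of _ j])
    then show "mixed_step ?q a G y = 0"
      unfolding mixed_step_eq_line_norm using q by simp
  qed (use Cons.prems in auto)
  also have "\<dots> = ennreal (\<Prod>j\<in>set (a # xs). L j powr (1 / p j)) * fold (mixed_step ?q) (a # xs) G x"
    using Cons.prems(1) by (simp add: ennreal_mult prod_nonneg mult.assoc)
  finally show ?case .
qed

lemma nn_integral_le_mixed_norm:
  fixes g :: "real^'n::{finite,linorder} \<Rightarrow> real"
  assumes p: "\<And>j. p j > 1" and [measurable]: "g \<in> borel_measurable borel"
    and S: "\<And>j. S j \<in> sets lborel" "\<And>j. emeasure lborel (S j) \<le> ennreal L" "L > 0"
    and supp: "\<And>x j. g x \<noteq> 0 \<Longrightarrow> x $ j \<in> S j"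
  shows "(\<integral>\<^sup>+ x. ennreal \<bar>g x\<bar> \<partial>lborel)
    \<le> ennreal (L powr (\<Sum>j\<in>UNIV. 1 / p j)) * mixed_norm (\<lambda>j. conj_exp (p j)) g"
proof -
  let ?xs = "sorted_list_of_set (UNIV :: 'n set)"
  have "(\<integral>\<^sup>+ x. ennreal \<bar>g x\<bar> \<partial>lborel) = fold (mixed_step (\<lambda>_. 1)) ?xs (\<lambda>x. ennreal \<bar>g x\<bar>) 0"
    by (rule nn_integral_lborel_eq_fold_mixed_step) simp
  also have "\<dots> \<le> ennreal (\<Prod>j\<in>set ?xs. L powr (1 / p j)) * mixed_norm (\<lambda>j. conj_exp (p j)) g"
    unfolding mixed_norm_def using supp
    by (intro fold_mixed_step_holder[where S=S and L="\<lambda>_. L"] p S) auto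
  also have "(\<Prod>j\<in>set ?xs. L powr (1 / p j)) = L powr (\<Sum>j\<in>UNIV. 1 / p j)"
    using S by (simp add: powr_sum)
  finally show ?thesis .
qed

section \<open>Cubes\<close>

lemma open_cube_eq_box: "open_cube c r = box (c - (\<chi> i. r / 2)) (c + (\<chi> i. r / 2))"
proof -
  have *: "\<And>a b::real. \<bar>a - b\<bar> < r / 2 \<longleftrightarrow> b - r / 2 < a \<and> a < b + r / 2" by arith
  show ?thesis
    unfolding open_cube_def set_eq_iff mem_box_cart vector_add_component vector_minus_component
      vec_lambda_beta
    by (simp only: * mem_Collect_eq) auto
qed

lemma sets_open_cube [measurable]: "open_cube c r \<in> sets lborel"
  unfolding open_cube_eq_box by simp

lemma measure_open_cube:
  fixes c :: "real^'n"
  assumes "r \<ge> 0"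
  shows "measure lborel (open_cube c r) = r ^ CARD('n)"
proof -
  have "((c + (\<chi> i. r / 2)) - (c - (\<chi> i. r / 2))) \<bullet> b = r"
    "(c - (\<chi> i. r / 2)) \<bullet> b \<le> (c + (\<chi> i. r / 2)) \<bullet> b"
    if "b \<in> (Basis :: (real^'n) set)" for b
  proof -
    from that obtain i where b: "b = axis i 1" by (auto simp: Basis_vec_def)
    show "((c + (\<chi> i. r / 2)) - (c - (\<chi> i. r / 2))) \<bullet> b = r"
      "(c - (\<chi> i. r / 2)) \<bullet> b \<le> (c + (\<chi> i. r / 2)) \<bullet> b"
      unfolding b using assms by (simp_all flip: cart_eq_inner_axis)
  qed
  then show ?thesis
    unfolding open_cube_eq_box measure_lborel_box_eq by simp
qed

lemma exists_nat_open_cube_mem: "\<exists>R::nat. x \<in> open_cube (0::real^'n) (real (Suc R))"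
proof -
  define R where "R = nat \<lceil>2 * (\<Sum>j\<in>UNIV. \<bar>x $ j\<bar>)\<rceil>"
  have component: "\<bar>x $ j\<bar> \<le> (\<Sum>j\<in>UNIV. \<bar>x $ j\<bar>)" for j
    by (rule member_le_sum) auto
  have "2 * (\<Sum>j\<in>UNIV. \<bar>x $ j\<bar>) \<le> real R"
    unfolding R_def by linarith
  with component have twice: "2 * \<bar>x $ j\<bar> \<le> real R" for j
    by (meson mult_left_mono order.trans zero_le_numeral)
  have "\<bar>x $ j - 0 $ j\<bar> < real (Suc R) / 2" for j
    using twice[of j] by (simp add: field_simps)
  then show ?thesis by (auto simp: open_cube_def)
qed

lemma AE_lborel_if_AE_open_cubes:
  fixes P :: "real^'n \<Rightarrow> bool"
  assumes "\<And>R::nat. AE x in lborel. x \<in> open_cube 0 (real (Suc R)) \<longrightarrow> P x"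
  shows "AE x in lborel. P x"
proof -
  have "AE x in lborel. \<forall>R::nat. x \<in> open_cube 0 (real (Suc R)) \<longrightarrow> P x"
    by (rule AE_all_countable[THEN iffD2]) (use assms in blast)
  then show ?thesis
  proof (rule eventually_mono)
    fix x assume "\<forall>R::nat. x \<in> open_cube 0 (real (Suc R)) \<longrightarrow> P x"
    moreover obtain R :: nat where "x \<in> open_cube 0 (real (Suc R))"
      using exists_nat_open_cube_mem by blast
    ultimately show "P x" by blast
  qed
qed

lemma exists_dyadic_scale:
  fixes r :: real
  assumes "r > 0"
  obtains k :: int where "2 powr (- k) \<le> r" "r < 2 * 2 powr (- k)"
proof -
  define l where "l = (2::real) powr \<lfloor>log 2 r\<rfloor>"
  have "l \<le> 2 powr (log 2 r)"
    unfolding l_def by (intro powr_mono) auto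
  moreover have "2 powr (log 2 r) < 2 powr (\<lfloor>log 2 r\<rfloor> + 1)"
    by (intro powr_less_mono) linarith+
  ultimately have "l \<le> r" "r < 2 * l"
    using assms by (simp_all add: l_def powr_add)
  then show ?thesis
    using that[of "- \<lfloor>log 2 r\<rfloor>"] by (simp add: l_def)
qed

text \<open>The triple of the dyadic cube of side \<open>l > r/2\<close> containing the centre \<open>c\<close>.\<close>

lemma open_cube_subset_dyadic_triple:
  fixes c :: "real^'n"
  assumes "r < 2 * 2 powr (- k)"
  shows "open_cube c r
    \<subseteq> open_cube (dyadic_center k (\<chi> j. \<lfloor>c $ j / 2 powr (- k)\<rfloor>)) (3 * 2 powr (- k))"
proof -
  define l where "l = (2::real) powr (- k)"
  have l: "l > 0" "r < 2 * l" using assms by (simp_all add: l_def)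
  have "\<bar>y $ j - l * (of_int \<lfloor>c $ j / l\<rfloor> + 1 / 2)\<bar> < 3 * l / 2"
    if y: "y \<in> open_cube c r" for y j
  proof -
    have "of_int \<lfloor>c $ j / l\<rfloor> * l \<le> c $ j" "c $ j < (of_int \<lfloor>c $ j / l\<rfloor> + 1) * l"
      using l by (simp_all only: floor_divide_lower floor_divide_upper)
    moreover have "\<bar>y $ j - c $ j\<bar> < r / 2" using y by (simp add: open_cube_def)
    moreover have "l * (of_int \<lfloor>c $ j / l\<rfloor> + 1 / 2) = of_int \<lfloor>c $ j / l\<rfloor> * l + l / 2"
      "(of_int \<lfloor>c $ j / l\<rfloor> + 1) * l = of_int \<lfloor>c $ j / l\<rfloor> * l + l"
      by (simp_all add: algebra_simps)
    ultimately show ?thesis using l by arith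
  qed
  then show ?thesis
    by (auto simp: open_cube_def dyadic_center_def l_def)
qed

lemma dyadic_cube_inj:
  fixes m m' :: "int^'n"
  assumes eq: "dyadic_cube k m = dyadic_cube k' m'"
  shows "k = k' \<and> m = m'"
proof -
  define l where "l = (2::real) powr (- k)"
  define l' where "l' = (2::real) powr (- k')"
  have lpos: "l > 0" "l' > 0" by (auto simp: l_def l'_def)
  define z :: "real^'n" where "z = (\<chi> i. l * of_int (m $ i))"
  have zin: "z \<in> dyadic_cube k m"
    using lpos by (auto simp: z_def dyadic_cube_def l_def)
  then have zin': "z \<in> dyadic_cube k' m'" using eq by simp
  have sides: "{l * of_int (m $ j) ..< l * (of_int (m $ j) + 1)}
      = {l' * of_int (m' $ j) ..< l' * (of_int (m' $ j) + 1)}" for j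
  proof -
    have "t \<in> {l * of_int (m $ j) ..< l * (of_int (m $ j) + 1)}
        \<longleftrightarrow> (\<chi> i. if i = j then t else z $ i) \<in> dyadic_cube k m" for t
      using zin by (auto simp: dyadic_cube_def l_def)
    moreover have "t \<in> {l' * of_int (m' $ j) ..< l' * (of_int (m' $ j) + 1)}
        \<longleftrightarrow> (\<chi> i. if i = j then t else z $ i) \<in> dyadic_cube k' m'" for t
      using zin' by (auto simp: dyadic_cube_def l'_def)
    ultimately show ?thesis using eq by blast
  qed
  have ends: "l * of_int (m $ j) = l' * of_int (m' $ j)"
    "l * (of_int (m $ j) + 1) = l' * (of_int (m' $ j) + 1)" for j
  proof -
    have "l * of_int (m $ j) < l * (of_int (m $ j) + 1)"
      "l' * of_int (m' $ j) < l' * (of_int (m' $ j) + 1)"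
      using lpos by auto
    from atLeastLessThan_inj[OF sides[of j] this]
    show "l * of_int (m $ j) = l' * of_int (m' $ j)"
      "l * (of_int (m $ j) + 1) = l' * (of_int (m' $ j) + 1)" .
  qed
  have "l = l'" using ends[of undefined] by (simp add: algebra_simps)
  then have "k = k'" by (simp add: l_def l'_def powr_inj)
  moreover have "m $ j = m' $ j" for j using ends(1)[of j] lpos \<open>l = l'\<close> by simp
  ultimately show ?thesis by (simp add: vec_eq_iff)
qed

lemma dyadic_cubes_eq_range: "dyadic_cubes = range (\<lambda>(k, m). dyadic_cube k m)"
  by (auto simp: dyadic_cubes_def image_def)

lemma inj_dyadic_cube: "inj (\<lambda>(k, m). dyadic_cube k m)"
  by (auto simp: inj_def dest: dyadic_cube_inj)

section \<open>Local integrability of blocks\<close>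

lemma block_exp_bounds:
  fixes p :: "'n::{finite,linorder} \<Rightarrow> real"
  assumes p0: "1 < p0" and p: "\<forall>i. 1 < p i"
    and exponents: "real CARD('n) / p0 < (\<Sum>i\<in>UNIV. 1 / p i)"
  shows "-1 < block_exp p0 p" "block_exp p0 p < 0"
proof -
  define S where "S = (\<Sum>i\<in>UNIV. 1 / p i)"
  have n: "real CARD('n) > 0" by simp
  have "1 / p0 < S / real CARD('n)" using exponents n by (simp add: S_def field_simps)
  then show "block_exp p0 p < 0" by (simp add: block_exp_def S_def)
  have "S < (\<Sum>i\<in>(UNIV::'n set). 1)"
    unfolding S_def using p by (intro sum_strict_mono) (auto simp: divide_less_eq_1)
  then have "S / real CARD('n) < 1" using n by simp
  moreover have "1 / p0 > 0" using p0 by simp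
  moreover have "block_exp p0 p = 1 / p0 - S / real CARD('n)"
    by (simp add: block_exp_def S_def)
  ultimately show "-1 < block_exp p0 p" by linarith
qed

lemma power_powr_block_exp:
  fixes p :: "'n::{finite,linorder} \<Rightarrow> real"
  assumes "r > 0"
  shows "(r ^ CARD('n)) powr block_exp p0 p = r powr (real CARD('n) / p0 - (\<Sum>i\<in>UNIV. 1 / p i))"
proof -
  have "(r ^ CARD('n)) powr block_exp p0 p = r powr (real CARD('n) * block_exp p0 p)"
    using assms by (simp add: powr_realpow[symmetric] powr_powr)
  also have "real CARD('n) * block_exp p0 p = real CARD('n) / p0 - (\<Sum>i\<in>UNIV. 1 / p i)"
    by (simp add: block_exp_def field_simps)
  finally show ?thesis .
qed

lemma min_powr_mult_powr_le:
  fixes r s S a :: real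
  assumes "r > 0" "s > 0" "a > 0" "a < S"
  shows "min r s powr S * r powr (a - S) \<le> s powr a"
proof (cases "r \<le> s")
  case True
  then have "min r s powr S * r powr (a - S) = r powr a"
    using assms by (simp add: powr_add[symmetric])
  also have "\<dots> \<le> s powr a" using True assms by (intro powr_mono2) auto
  finally show ?thesis .
next
  case False
  then have "min r s powr S * r powr (a - S) = s powr S * r powr (a - S)"
    using False by (simp add: min_def)
  also have "\<dots> \<le> s powr S * s powr (a - S)"
    using False assms by (intro mult_left_mono powr_mono2') auto
  also have "\<dots> = s powr a" using assms by (simp add: powr_add[symmetric])
  finally show ?thesis .
qed

lemma nn_integral_open_cube_le_mixed_norm:
  fixes b :: "real^'n::{finite,linorder} \<Rightarrow> real" and p :: "'n \<Rightarrow> real"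
  assumes p: "\<forall>i. 1 < p i" and [measurable]: "b \<in> borel_measurable borel"
    and supp: "{x. b x \<noteq> 0} \<subseteq> open_cube c r" and r: "r > 0" and s: "s > 0"
  shows "(\<integral>\<^sup>+ x. indicator (open_cube 0 s) x * ennreal \<bar>b x\<bar> \<partial>lborel)
    \<le> ennreal (min r s powr (\<Sum>i\<in>UNIV. 1 / p i)) * mixed_norm (\<lambda>j. conj_exp (p j)) b"
proof -
  define g where "g x = indicator (open_cube 0 s) x * b x" for x
  define S where "S j = {c $ j - r / 2 <..< c $ j + r / 2} \<inter> {- s / 2 <..< s / 2}" for j
  have S_meas: "S j \<in> sets lborel" for j
    by (simp add: S_def)
  have S_small: "emeasure lborel (S j) \<le> ennreal (min r s)" for j
  proof -
    have "emeasure lborel (S j) \<le> emeasure lborel {c $ j - r / 2 <..< c $ j + r / 2}"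
      "emeasure lborel (S j) \<le> emeasure lborel {- s / 2 <..< s / 2}"
      by (intro emeasure_mono; auto simp: S_def)+
    with r s show ?thesis by (simp add: min_def)
  qed
  have S_supp: "x $ j \<in> S j" if "g x \<noteq> 0" for x j
  proof -
    from that supp have "x \<in> open_cube 0 s" "x \<in> open_cube c r"
      by (auto simp: g_def split: split_indicator_asm)
    then have "\<bar>x $ j - 0 $ j\<bar> < s / 2" "\<bar>x $ j - c $ j\<bar> < r / 2"
      unfolding open_cube_def by blast+
    then show ?thesis
      unfolding S_def abs_less_iff by auto
  qed
  have "(\<integral>\<^sup>+ x. indicator (open_cube 0 s) x * ennreal \<bar>b x\<bar> \<partial>lborel)
      = (\<integral>\<^sup>+ x. ennreal \<bar>g x\<bar> \<partial>lborel)"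
    by (intro nn_integral_cong) (simp add: g_def split: split_indicator)
  also have "\<dots> \<le> ennreal (min r s powr (\<Sum>i\<in>UNIV. 1 / p i)) * mixed_norm (\<lambda>j. conj_exp (p j)) g"
    using p r s by (intro nn_integral_le_mixed_norm[OF _ _ S_meas S_small _ S_supp]) (auto simp: g_def)
  also have "mixed_norm (\<lambda>j. conj_exp (p j)) g \<le> mixed_norm (\<lambda>j. conj_exp (p j)) b"
    using p by (intro mixed_norm_mono) (auto simp: conj_exp_pos g_def abs_mult split: split_indicator)
  finally show ?thesis
    by (simp add: mult_left_mono)
qed

lemma nn_integral_open_cube_block_le:
  fixes b :: "real^'n::{finite,linorder} \<Rightarrow> real" and p :: "'n \<Rightarrow> real"
  assumes p0: "1 < p0" and p: "\<forall>i. 1 < p i"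
    and exponents: "real CARD('n) / p0 < (\<Sum>i\<in>UNIV. 1 / p i)"
    and r: "r > 0" and s: "s > 0" and block: "block_on p0 p (open_cube c r) b"
  shows "(\<integral>\<^sup>+ x. indicator (open_cube 0 s) x * ennreal \<bar>b x\<bar> \<partial>lborel)
    \<le> ennreal (s powr (real CARD('n) / p0))"
proof -
  let ?\<Sigma> = "\<Sum>i\<in>UNIV. 1 / p i"
  have "(\<integral>\<^sup>+ x. indicator (open_cube 0 s) x * ennreal \<bar>b x\<bar> \<partial>lborel)
      \<le> ennreal (min r s powr ?\<Sigma>) * mixed_norm (\<lambda>j. conj_exp (p j)) b"
    using block p r s by (intro nn_integral_open_cube_le_mixed_norm) (auto simp: block_on_def)
  also have "\<dots> \<le> ennreal (min r s powr ?\<Sigma>) * ennreal ((r ^ CARD('n)) powr block_exp p0 p)"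
    using block r by (intro mult_left_mono) (auto simp: block_on_def measure_open_cube)
  also have "\<dots> = ennreal (min r s powr ?\<Sigma> * r powr (real CARD('n) / p0 - ?\<Sigma>))"
    using r by (simp add: power_powr_block_exp ennreal_mult)
  also have "\<dots> \<le> ennreal (s powr (real CARD('n) / p0))"
    using p0 r s exponents by (intro ennreal_leI min_powr_mult_powr_le) auto
  finally show ?thesis .
qed

lemma block_on_zero:
  fixes p :: "'n::{finite,linorder} \<Rightarrow> real"
  assumes "\<forall>i. 1 < p i"
  shows "block_on p0 p Q (\<lambda>_. 0)"
proof -
  have "mixed_norm (\<lambda>i. conj_exp (p i)) (\<lambda>_. 0) = 0"
    using assms by (intro mixed_norm_zero) (simp add: conj_exp_pos)
  then show ?thesis by (simp add: block_on_def)
qed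

section \<open>Regrouping a block decomposition along dyadic cubes\<close>

lemma summable_restrict:
  fixes g :: "nat \<Rightarrow> real"
  assumes "summable (\<lambda>i. \<bar>g i\<bar>)"
  shows "summable (\<lambda>i. \<bar>if P i then g i else 0\<bar>)" "summable (\<lambda>i. if P i then g i else 0)"
proof -
  show "summable (\<lambda>i. \<bar>if P i then g i else 0\<bar>)"
    by (rule summable_comparison_test'[OF assms, of 0]) auto
  then show "summable (\<lambda>i. if P i then g i else 0)"
    by (rule summable_rabs_cancel)
qed

lemma has_sum_restrict:
  fixes g :: "nat \<Rightarrow> real"
  assumes "summable (\<lambda>i. \<bar>g i\<bar>)"
  shows "(g has_sum (\<Sum>i. if P i then g i else 0)) {i. P i}"
proof -
  have "((\<lambda>i. if P i then g i else 0) has_sum (\<Sum>i. if P i then g i else 0)) UNIV"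
    using summable_restrict[OF assms, of P]
    by (intro norm_summable_imp_has_sum) (auto intro: summable_sums)
  then show ?thesis
    by (rule has_sum_cong_neutral[THEN iffD1, rotated -1]) auto
qed

lemma has_sum_regroup:
  fixes g :: "nat \<Rightarrow> real" and cls :: "nat \<Rightarrow> 'k"
  assumes "summable (\<lambda>i. \<bar>g i\<bar>)" and "g sums S"
  shows "((\<lambda>k. \<Sum>i. if cls i = k then g i else 0) has_sum S) UNIV"
proof -
  have "(g has_sum S) UNIV"
    using assms by (intro norm_summable_imp_has_sum) auto
  moreover have "bij_betw (\<lambda>i. (cls i, i)) UNIV (Sigma UNIV (\<lambda>k. {i. cls i = k}))"
    by (auto simp: bij_betw_def inj_on_def image_def)
  ultimately have "((\<lambda>z. g (snd z)) has_sum S) (Sigma UNIV (\<lambda>k. {i. cls i = k}))"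
    using has_sum_reindex_bij_betw[of "\<lambda>i. (cls i, i)"] by fastforce
  then show ?thesis
    by (rule has_sum_Sigma') (use has_sum_restrict[OF assms(1)] in simp)
qed

locale block_decomposition =
  fixes p0 :: real and p :: "'n::{finite,linorder} \<Rightarrow> real"
    and f :: "real^('n::{finite,linorder}) \<Rightarrow> real"
    and lam :: "nat \<Rightarrow> real" and b :: "nat \<Rightarrow> real^('n::{finite,linorder}) \<Rightarrow> real"
  assumes p0: "1 < p0" and p: "\<forall>i. 1 < p i"
    and exponents: "real CARD('n) / p0 < (\<Sum>i\<in>UNIV. 1 / p i)"
    and decomp: "block_decomp p0 p f lam b"
begin

lemma summable_abs_lam: "summable (\<lambda>i. \<bar>lam i\<bar>)"
  using decomp by (simp add: block_decomp_def)

definition block_cube :: "nat \<Rightarrow> (real^('n::{finite,linorder})) \<times> real" where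
  "block_cube i = (SOME (c, r). r > 0 \<and> block_on p0 p (open_cube c r) (b i))"

lemma block_cube:
  "snd (block_cube i) > 0" "block_on p0 p (open_cube (fst (block_cube i)) (snd (block_cube i))) (b i)"
proof -
  have "is_block p0 p (b i)" using decomp by (simp add: block_decomp_def)
  then have "\<exists>cr. snd cr > 0 \<and> block_on p0 p (open_cube (fst cr) (snd cr)) (b i)"
    by (auto simp: is_block_def)
  from someI_ex[OF this]
  show "snd (block_cube i) > 0"
    "block_on p0 p (open_cube (fst (block_cube i)) (snd (block_cube i))) (b i)"
    by (simp_all add: block_cube_def case_prod_unfold)
qed

lemma borel_measurable_b [measurable]: "b i \<in> borel_measurable borel"
  using block_cube(2)[of i] by (simp add: block_on_def)

definition majorant :: "real^('n::{finite,linorder}) \<Rightarrow> ennreal" where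
  "majorant x = (\<Sum>i. ennreal \<bar>lam i * b i x\<bar>)"

lemma borel_measurable_majorant [measurable]: "majorant \<in> borel_measurable borel"
  unfolding majorant_def by measurable

lemma nn_integral_open_cube_majorant_le:
  assumes "s > 0"
  shows "(\<integral>\<^sup>+ x. indicator (open_cube 0 s) x * majorant x \<partial>lborel)
    \<le> ennreal (s powr (real CARD('n) / p0)) * ennreal (\<Sum>i. \<bar>lam i\<bar>)"
proof -
  let ?K = "open_cube (0::real^('n::{finite,linorder})) s"
  let ?C = "ennreal (s powr (real CARD('n) / p0))"
  have "(\<integral>\<^sup>+ x. indicator ?K x * majorant x \<partial>lborel)
      = (\<integral>\<^sup>+ x. (\<Sum>i. ennreal \<bar>lam i\<bar> * (indicator ?K x * ennreal \<bar>b i x\<bar>)) \<partial>lborel)"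
    unfolding majorant_def
    by (subst ennreal_suminf_cmult[symmetric]) (simp add: abs_mult ennreal_mult ac_simps)
  also have "\<dots> = (\<Sum>i. ennreal \<bar>lam i\<bar> * \<integral>\<^sup>+ x. indicator ?K x * ennreal \<bar>b i x\<bar> \<partial>lborel)"
    by (subst nn_integral_suminf) (measurable, intro suminf_cong nn_integral_cmult, measurable)
  also have "\<dots> \<le> (\<Sum>i. ennreal \<bar>lam i\<bar> * ?C)"
    using nn_integral_open_cube_block_le[OF p0 p exponents block_cube(1) assms block_cube(2)]
    by (intro suminf_le mult_left_mono) auto
  also have "\<dots> = ?C * ennreal (\<Sum>i. \<bar>lam i\<bar>)"
    using summable_abs_lam by (simp add: suminf_ennreal2 mult.commute)
  finally show ?thesis by (simp add: mult.commute)
qed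

lemma AE_majorant_finite: "AE x in lborel. majorant x \<noteq> \<infinity>"
proof (rule AE_lborel_if_AE_open_cubes)
  fix R :: nat
  let ?K = "open_cube (0::real^('n::{finite,linorder})) (real (Suc R))"
  have "(\<integral>\<^sup>+ x. indicator ?K x * majorant x \<partial>lborel) < \<infinity>"
    using nn_integral_open_cube_majorant_le[of "real (Suc R)"]
    by (simp add: ennreal_mult_less_top order.strict_trans1)
  then have "AE x in lborel. indicator ?K x * majorant x \<noteq> \<infinity>"
    by (intro nn_integral_PInf_AE) auto
  then show "AE x in lborel. x \<in> ?K \<longrightarrow> majorant x \<noteq> \<infinity>"
    by (rule eventually_mono) (auto split: split_indicator)
qed

lemma AE_summable_abs_sums:
  "AE x in lborel. summable (\<lambda>i. \<bar>lam i * b i x\<bar>) \<and> (\<lambda>i. lam i * b i x) sums f x"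
  using AE_majorant_finite decomp[unfolded block_decomp_def, THEN conjunct2, THEN conjunct2, THEN conjunct1]
proof eventually_elim
  case (elim x)
  then have "summable (\<lambda>i. \<bar>lam i * b i x\<bar>)"
    by (intro summable_suminf_not_top) (auto simp: majorant_def)
  with elim show ?case by (simp add: sums_def)
qed

lemma nn_integral_open_cube_abs_le:
  assumes "s > 0"
  shows "(\<integral>\<^sup>+ x. indicator (open_cube 0 s) x * ennreal \<bar>f x\<bar> \<partial>lborel)
    \<le> ennreal (s powr (real CARD('n) / p0)) * ennreal (\<Sum>i. \<bar>lam i\<bar>)"
proof -
  have "AE x in lborel. ennreal \<bar>f x\<bar> \<le> majorant x"
    using AE_summable_abs_sums
  proof eventually_elim
    case (elim x)
    then have "\<bar>f x\<bar> \<le> (\<Sum>i. \<bar>lam i * b i x\<bar>)"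
      using summable_rabs[of "\<lambda>i. lam i * b i x"] by (simp add: sums_iff)
    with elim show ?case
      by (simp add: majorant_def suminf_ennreal2 ennreal_leI)
  qed
  then have "(\<integral>\<^sup>+ x. indicator (open_cube 0 s) x * ennreal \<bar>f x\<bar> \<partial>lborel)
      \<le> (\<integral>\<^sup>+ x. indicator (open_cube 0 s) x * majorant x \<partial>lborel)"
    by (intro nn_integral_mono_AE) (auto elim!: eventually_mono intro: mult_left_mono)
  also have "\<dots> \<le> ennreal (s powr (real CARD('n) / p0)) * ennreal (\<Sum>i. \<bar>lam i\<bar>)"
    using assms by (rule nn_integral_open_cube_majorant_le)
  finally show ?thesis .
qed

definition dyadic_index :: "nat \<Rightarrow> int \<times> (int^('n::{finite,linorder}))" where
  "dyadic_index i = (SOME km. 2 powr (- real_of_int (fst km)) \<le> snd (block_cube i) \<and>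
     open_cube (fst (block_cube i)) (snd (block_cube i))
       \<subseteq> open_cube (dyadic_center (fst km) (snd km)) (3 * 2 powr (- real_of_int (fst km))))"

lemma exists_dyadic_cover:
  "\<exists>km. 2 powr (- real_of_int (fst km)) \<le> snd (block_cube i) \<and>
     open_cube (fst (block_cube i)) (snd (block_cube i))
       \<subseteq> open_cube (dyadic_center (fst km) (snd km)) (3 * 2 powr (- real_of_int (fst km)))"
proof -
  obtain k :: int where k: "2 powr (- k) \<le> snd (block_cube i)" "snd (block_cube i) < 2 * 2 powr (- k)"
    using exists_dyadic_scale[OF block_cube(1)] .
  with open_cube_subset_dyadic_triple[of "snd (block_cube i)" k "fst (block_cube i)"]
  show ?thesis by (intro exI[of _ "(k, _)"]) auto
qed

lemma dyadic_index:
  assumes "dyadic_index i = (k, m)"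
  shows "2 powr (- k) \<le> snd (block_cube i)"
    "open_cube (fst (block_cube i)) (snd (block_cube i))
       \<subseteq> open_cube (dyadic_center k m) (3 * 2 powr (- k))"
  using someI_ex[OF exists_dyadic_cover[of i]] assms
  by (simp_all add: dyadic_index_def)

definition class_weight :: "int \<times> (int^('n::{finite,linorder})) \<Rightarrow> real" where
  "class_weight \<kappa> = (\<Sum>i. if dyadic_index i = \<kappa> then \<bar>lam i\<bar> else 0)"

definition dyadic_coeff :: "int \<times> (int^('n::{finite,linorder})) \<Rightarrow> real" where
  "dyadic_coeff \<kappa> = 3 ^ CARD('n) * class_weight \<kappa>"

definition normalized_coeff :: "int \<times> (int^('n::{finite,linorder})) \<Rightarrow> nat \<Rightarrow> real" where
  "normalized_coeff \<kappa> i = (if dyadic_index i = \<kappa> then lam i / dyadic_coeff \<kappa> else 0)"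

text \<open>The value \<open>0\<close> where the series does not converge absolutely keeps the function
  defined everywhere and Borel measurable.\<close>

definition dyadic_block :: "int \<times> (int^('n::{finite,linorder})) \<Rightarrow> real^('n::{finite,linorder}) \<Rightarrow> real" where
  "dyadic_block \<kappa> x = (if (\<Sum>i. ennreal \<bar>normalized_coeff \<kappa> i * b i x\<bar>) \<noteq> \<infinity>
     then (\<Sum>i. normalized_coeff \<kappa> i * b i x) else 0)"

lemma summable_class_terms: "summable (\<lambda>i. if dyadic_index i = \<kappa> then \<bar>lam i\<bar> else 0)"
  using summable_restrict(2)[of "\<lambda>i. \<bar>lam i\<bar>" "\<lambda>i. dyadic_index i = \<kappa>"] summable_abs_lam
  by simp

lemma class_weight_nonneg: "class_weight \<kappa> \<ge> 0"
  unfolding class_weight_def using summable_class_terms by (intro suminf_nonneg) auto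

lemma has_sum_dyadic_coeff: "(dyadic_coeff has_sum (3 ^ CARD('n) * (\<Sum>i. \<bar>lam i\<bar>))) UNIV"
  unfolding dyadic_coeff_def[abs_def] class_weight_def
  using summable_abs_lam by (intro has_sum_cmult_right has_sum_regroup) (auto intro: summable_sums)

lemma dyadic_coeff_nonneg: "dyadic_coeff \<kappa> \<ge> 0"
  using class_weight_nonneg by (simp add: dyadic_coeff_def)

lemma abs_normalized_coeff:
  "\<bar>normalized_coeff \<kappa> i\<bar> = (if dyadic_index i = \<kappa> then \<bar>lam i\<bar> else 0) / dyadic_coeff \<kappa>"
  using dyadic_coeff_nonneg[of \<kappa>] by (simp add: normalized_coeff_def)

lemma summable_abs_normalized_coeff: "summable (\<lambda>i. \<bar>normalized_coeff \<kappa> i\<bar>)"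
  unfolding abs_normalized_coeff using summable_class_terms by (rule summable_divide)

lemma sum_abs_normalized_coeff: "(\<Sum>i. \<bar>normalized_coeff \<kappa> i\<bar>) = class_weight \<kappa> / dyadic_coeff \<kappa>"
  unfolding abs_normalized_coeff class_weight_def using summable_class_terms by (rule suminf_divide)

lemma borel_measurable_dyadic_block [measurable]: "dyadic_block \<kappa> \<in> borel_measurable borel"
  unfolding dyadic_block_def by measurable

lemma abs_dyadic_block_le:
  "ennreal \<bar>dyadic_block \<kappa> x\<bar> \<le> (\<Sum>i. ennreal \<bar>normalized_coeff \<kappa> i\<bar> * ennreal \<bar>b i x\<bar>)"
proof (cases "(\<Sum>i. ennreal \<bar>normalized_coeff \<kappa> i * b i x\<bar>) = \<infinity>")
  case False
  then have sm: "summable (\<lambda>i. \<bar>normalized_coeff \<kappa> i * b i x\<bar>)"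
    by (intro summable_suminf_not_top) auto
  have "ennreal \<bar>dyadic_block \<kappa> x\<bar> \<le> ennreal (\<Sum>i. \<bar>normalized_coeff \<kappa> i * b i x\<bar>)"
    using False summable_rabs[OF sm] by (intro ennreal_leI) (simp add: dyadic_block_def)
  also have "\<dots> = (\<Sum>i. ennreal \<bar>normalized_coeff \<kappa> i\<bar> * ennreal \<bar>b i x\<bar>)"
    using sm by (simp add: suminf_ennreal2[symmetric] abs_mult ennreal_mult)
  finally show ?thesis .
qed (simp add: dyadic_block_def)

lemma dyadic_block_support:
  "{x. dyadic_block (k, m) x \<noteq> 0} \<subseteq> open_cube (dyadic_center k m) (3 * 2 powr (- k))"
proof
  fix x assume x: "x \<in> {x. dyadic_block (k, m) x \<noteq> 0}"
  have "\<exists>i. dyadic_index i = (k, m) \<and> b i x \<noteq> 0"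
  proof (rule ccontr)
    assume "\<not> (\<exists>i. dyadic_index i = (k, m) \<and> b i x \<noteq> 0)"
    then have "\<And>i. normalized_coeff (k, m) i * b i x = 0"
      by (auto simp: normalized_coeff_def)
    with x show False by (simp add: dyadic_block_def)
  qed
  then obtain i where i: "dyadic_index i = (k, m)" "b i x \<noteq> 0" by blast
  then have "x \<in> open_cube (fst (block_cube i)) (snd (block_cube i))"
    using block_cube(2)[of i] by (auto simp: block_on_def)
  then show "x \<in> open_cube (dyadic_center k m) (3 * 2 powr (- real_of_int k))"
    using dyadic_index(2)[OF i(1)] by auto
qed

text \<open>Passing from the cube of \<open>b i\<close> to the triple of its dyadic cube costs at most \<open>3\<^sup>n\<close>,
  because the block exponent lies in \<open>[-1, 0]\<close>.\<close>

lemma mixed_norm_b_le_dyadic: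
  assumes "dyadic_index i = (k, m)"
  shows "mixed_norm (\<lambda>j. conj_exp (p j)) (b i)
    \<le> ennreal (3 ^ CARD('n) *
        measure lborel (open_cube (dyadic_center k m) (3 * 2 powr (- k))) powr block_exp p0 p)"
proof -
  define e where "e = block_exp p0 p"
  define r where "r = snd (block_cube i)"
  define l :: real where "l = 2 powr (- k)"
  have e: "-1 < e" "e < 0" using block_exp_bounds[OF p0 p exponents] by (simp_all add: e_def)
  have rl: "0 < l" "l \<le> r" using dyadic_index(1)[OF assms] by (simp_all add: l_def r_def)
  have "mixed_norm (\<lambda>j. conj_exp (p j)) (b i) \<le> ennreal ((r ^ CARD('n)) powr e)"
    using block_cube[of i] by (simp add: block_on_def measure_open_cube e_def r_def)
  also have "(r ^ CARD('n)) powr e \<le> (l ^ CARD('n)) powr e"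
    using e rl by (intro powr_mono2') (auto intro: power_mono)
  also have "\<dots> \<le> (3 ^ CARD('n)) powr (1 + e) * (l ^ CARD('n)) powr e"
  proof -
    have "1 \<le> ((3::real) ^ CARD('n)) powr (1 + e)"
      using e by (intro ge_one_powr_ge_zero) auto
    then show ?thesis
      using mult_right_mono[of 1 _ "(l ^ CARD('n)) powr e"] by simp
  qed
  also have "\<dots> = 3 ^ CARD('n) * ((3 * l) ^ CARD('n)) powr e"
    using rl by (simp add: powr_add power_mult_distrib powr_mult)
  finally show ?thesis
    using rl by (simp add: measure_open_cube e_def l_def ennreal_leI order_trans)
qed

lemma mixed_norm_dyadic_block_le:
  "mixed_norm (\<lambda>j. conj_exp (p j)) (dyadic_block (k, m))
    \<le> ennreal (measure lborel (open_cube (dyadic_center k m) (3 * 2 powr (- k))) powr block_exp p0 p)"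
proof -
  let ?\<kappa> = "(k, m)"
  let ?q = "\<lambda>j. conj_exp (p j)"
  let ?xs = "sorted_list_of_set (UNIV :: 'n set)"
  let ?V = "measure lborel (open_cube (dyadic_center k m) (3 * 2 powr (- k))) powr block_exp p0 p"
  have q: "\<And>j. ?q j \<ge> 1" "\<And>j. ?q j > 0"
    using p by (simp_all add: conj_exp_pos conj_exp_gt_1 less_imp_le)
  have "mixed_norm ?q (dyadic_block ?\<kappa>)
      \<le> fold (mixed_step ?q) ?xs (\<lambda>x. \<Sum>i. ennreal \<bar>normalized_coeff ?\<kappa> i\<bar> * ennreal \<bar>b i x\<bar>) 0"
    unfolding mixed_norm_def by (intro fold_mixed_step_mono q abs_dyadic_block_le)
  also have "\<dots> \<le> (\<Sum>i. ennreal \<bar>normalized_coeff ?\<kappa> i\<bar> * mixed_norm ?q (b i))"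
    unfolding mixed_norm_def
    by (rule order_trans[OF fold_mixed_step_suminf_le[OF q(1)]], measurable)
      (simp add: fold_mixed_step_cmult q(2))
  also have "\<dots> \<le> (\<Sum>i. ennreal \<bar>normalized_coeff ?\<kappa> i\<bar> * ennreal (3 ^ CARD('n) * ?V))"
  proof (intro suminf_le)
    fix i
    show "ennreal \<bar>normalized_coeff ?\<kappa> i\<bar> * mixed_norm ?q (b i)
        \<le> ennreal \<bar>normalized_coeff ?\<kappa> i\<bar> * ennreal (3 ^ CARD('n) * ?V)"
      by (cases "dyadic_index i = ?\<kappa>")
        (simp_all add: mult_left_mono mixed_norm_b_le_dyadic normalized_coeff_def)
  qed auto
  also have "\<dots> = ennreal (3 ^ CARD('n) * ?V) * ennreal (class_weight ?\<kappa> / dyadic_coeff ?\<kappa>)"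
    using summable_abs_normalized_coeff
    by (simp add: suminf_ennreal2 mult.commute sum_abs_normalized_coeff)
  also have "\<dots> \<le> ennreal ?V"
    by (cases "class_weight ?\<kappa> = 0") (simp_all add: dyadic_coeff_def flip: ennreal_mult)
  finally show ?thesis by simp
qed

lemma block_on_dyadic_block:
  "block_on p0 p (open_cube (dyadic_center k m) (3 * 2 powr (- k))) (dyadic_block (k, m))"
  using dyadic_block_support mixed_norm_dyadic_block_le by (simp add: block_on_def)

lemma dyadic_coeff_mult_dyadic_block:
  assumes sm: "summable (\<lambda>i. \<bar>lam i * b i x\<bar>)"
  shows "dyadic_coeff \<kappa> * dyadic_block \<kappa> x = (\<Sum>i. if dyadic_index i = \<kappa> then lam i * b i x else 0)"
proof (cases "class_weight \<kappa> = 0")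
  case True
  then have "\<forall>i. (if dyadic_index i = \<kappa> then \<bar>lam i\<bar> else 0) = 0"
    using summable_class_terms unfolding class_weight_def by (subst (asm) suminf_eq_zero_iff) auto
  then have "(\<lambda>i. if dyadic_index i = \<kappa> then lam i * b i x else 0) = (\<lambda>i. 0)"
    by (auto simp: fun_eq_iff split: if_splits)
  then show ?thesis using True by (simp add: dyadic_coeff_def)
next
  case False
  then have pos: "dyadic_coeff \<kappa> > 0"
    using class_weight_nonneg[of \<kappa>] by (simp add: dyadic_coeff_def)
  have eq: "normalized_coeff \<kappa> i * b i x
      = (if dyadic_index i = \<kappa> then lam i * b i x else 0) / dyadic_coeff \<kappa>" for i
    by (simp add: normalized_coeff_def)
  note sr = summable_restrict[OF sm, of "\<lambda>i. dyadic_index i = \<kappa>"]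
  have "summable (\<lambda>i. \<bar>normalized_coeff \<kappa> i * b i x\<bar>)"
    unfolding eq using sr(1) pos by (simp add: summable_divide)
  then have "(\<Sum>i. ennreal \<bar>normalized_coeff \<kappa> i * b i x\<bar>) \<noteq> top"
    by (intro ennreal_suminf_neq_top) auto
  then have "dyadic_block \<kappa> x
      = (\<Sum>i. (if dyadic_index i = \<kappa> then lam i * b i x else 0) / dyadic_coeff \<kappa>)"
    by (simp add: dyadic_block_def eq)
  also have "\<dots> = (\<Sum>i. if dyadic_index i = \<kappa> then lam i * b i x else 0) / dyadic_coeff \<kappa>"
    using sr(2) by (rule suminf_divide)
  finally show ?thesis using pos by simp
qed

lemma AE_has_sum_dyadic: "AE x in lborel. ((\<lambda>\<kappa>. dyadic_coeff \<kappa> * dyadic_block \<kappa> x) has_sum f x) UNIV"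
  using AE_summable_abs_sums
proof eventually_elim
  case (elim x)
  then have "((\<lambda>\<kappa>. \<Sum>i. if dyadic_index i = \<kappa> then lam i * b i x else 0) has_sum f x) UNIV"
    by (intro has_sum_regroup) auto
  then show ?case using elim by (simp add: dyadic_coeff_mult_dyadic_block)
qed

lemma exists_dyadic_block_decomposition:
  "\<exists>(L :: (real^('n::{finite,linorder})) set \<Rightarrow> real) B.
     (\<forall>Q\<in>dyadic_cubes. L Q \<ge> 0) \<and>
     (L has_sum (3 ^ CARD('n) * (\<Sum>i. \<bar>lam i\<bar>))) dyadic_cubes \<and>
     (\<forall>k m. block_on p0 p (open_cube (dyadic_center k m) (3 * 2 powr (- k))) (B (dyadic_cube k m))) \<and>
     (AE x in lborel. ((\<lambda>Q. L Q * B Q x) has_sum f x) dyadic_cubes)"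
proof (intro exI conjI)
  let ?D = "\<lambda>(k, m). dyadic_cube k m :: (real^('n::{finite,linorder})) set"
  define L where "L Q = dyadic_coeff (inv ?D Q)" for Q
  define B where "B Q = dyadic_block (inv ?D Q)" for Q
  have L: "L (?D \<kappa>) = dyadic_coeff \<kappa>" and B: "B (?D \<kappa>) = dyadic_block \<kappa>" for \<kappa>
    by (simp_all add: L_def B_def inj_dyadic_cube)
  show "\<forall>Q\<in>dyadic_cubes. L Q \<ge> 0"
    unfolding dyadic_cubes_eq_range using dyadic_coeff_nonneg by (auto simp: L)
  show "(L has_sum (3 ^ CARD('n) * (\<Sum>i. \<bar>lam i\<bar>))) dyadic_cubes"
    unfolding dyadic_cubes_eq_range using has_sum_dyadic_coeff
    by (simp add: has_sum_reindex[OF inj_dyadic_cube] comp_def L)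
  show "\<forall>k m. block_on p0 p (open_cube (dyadic_center k m) (3 * 2 powr (- k))) (B (dyadic_cube k m))"
    using block_on_dyadic_block B by (metis case_prod_conv)
  show "AE x in lborel. ((\<lambda>Q. L Q * B Q x) has_sum f x) dyadic_cubes"
    using AE_has_sum_dyadic
    by (rule eventually_mono)
      (simp add: dyadic_cubes_eq_range has_sum_reindex[OF inj_dyadic_cube] comp_def L B)
qed

end

section \<open>The block norm\<close>

lemma block_norm_nonneg: "f \<in> block_space p0 p \<Longrightarrow> block_norm p0 p f \<ge> 0"
  unfolding block_norm_def block_space_def block_decomp_def
  by (intro cInf_greatest) (auto intro!: suminf_nonneg)

lemma block_decomp_sum_less:
  assumes "f \<in> block_space p0 p" "block_norm p0 p f < c"
  obtains lam b where "block_decomp p0 p f lam b" "(\<Sum>i. \<bar>lam i\<bar>) < c"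
proof -
  have "{(\<Sum>i. \<bar>lam i\<bar>) | lam b. block_decomp p0 p f lam b} \<noteq> {}"
    using assms(1) by (auto simp: block_space_def)
  from cInf_lessD[OF this] assms(2) that show ?thesis
    by (auto simp: block_norm_def)
qed

lemma nn_integral_open_cube_abs_le_block_norm:
  fixes f :: "real^('n::{finite,linorder}) \<Rightarrow> real"
  assumes p0: "1 < p0" and p: "\<forall>i. 1 < p i"
    and exponents: "real CARD('n) / p0 < (\<Sum>i\<in>UNIV. 1 / p i)"
    and f: "f \<in> block_space p0 p" and s: "s > 0"
  shows "(\<integral>\<^sup>+ x. indicator (open_cube 0 s) x * ennreal \<bar>f x\<bar> \<partial>lborel)
    \<le> ennreal (s powr (real CARD('n) / p0) * block_norm p0 p f)"
proof (rule ennreal_le_epsilon)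
  fix \<epsilon> :: real assume "0 < \<epsilon>"
  define C where "C = s powr (real CARD('n) / p0)"
  have C: "C > 0" using s by (simp add: C_def)
  obtain lam b where dec: "block_decomp p0 p f lam b"
    and sum: "(\<Sum>i. \<bar>lam i\<bar>) < block_norm p0 p f + \<epsilon> / C"
    using block_decomp_sum_less[OF f, of "block_norm p0 p f + \<epsilon> / C"] \<open>0 < \<epsilon>\<close> C by auto
  interpret block_decomposition p0 p f lam b
    using p0 p exponents dec by unfold_locales
  have "(\<integral>\<^sup>+ x. indicator (open_cube 0 s) x * ennreal \<bar>f x\<bar> \<partial>lborel)
      \<le> ennreal C * ennreal (\<Sum>i. \<bar>lam i\<bar>)"
    unfolding C_def using s by (rule nn_integral_open_cube_abs_le)
  also have "\<dots> \<le> ennreal (C * block_norm p0 p f + \<epsilon>)"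
    using sum C summable_abs_lam
    by (simp add: ennreal_mult[symmetric] suminf_nonneg ennreal_leI field_simps)
  finally show "(\<integral>\<^sup>+ x. indicator (open_cube 0 s) x * ennreal \<bar>f x\<bar> \<partial>lborel)
      \<le> ennreal (C * block_norm p0 p f) + ennreal \<epsilon>"
    using C block_norm_nonneg[OF f] \<open>0 < \<epsilon>\<close> by (simp add: C_def ennreal_plus)
qed

lemma AE_zero_if_block_norm_eq_0:
  fixes f :: "real^('n::{finite,linorder}) \<Rightarrow> real"
  assumes p0: "1 < p0" and p: "\<forall>i. 1 < p i"
    and exponents: "real CARD('n) / p0 < (\<Sum>i\<in>UNIV. 1 / p i)"
    and f: "f \<in> block_space p0 p" and norm: "block_norm p0 p f = 0"
  shows "AE x in lborel. f x = 0"
proof (rule AE_lborel_if_AE_open_cubes)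
  fix R :: nat
  have [measurable]: "f \<in> borel_measurable borel" using f by (simp add: block_space_def)
  have "(\<integral>\<^sup>+ x. indicator (open_cube 0 (real (Suc R))) x * ennreal \<bar>f x\<bar> \<partial>lborel) = 0"
    using nn_integral_open_cube_abs_le_block_norm[OF p0 p exponents f, of "real (Suc R)"] norm
    by simp
  then have "AE x in lborel. indicator (open_cube 0 (real (Suc R))) x * ennreal \<bar>f x\<bar> = 0"
    by (subst (asm) nn_integral_0_iff_AE) auto
  then show "AE x in lborel. x \<in> open_cube 0 (real (Suc R)) \<longrightarrow> f x = 0"
    by (rule eventually_mono) (auto split: split_indicator)
qed

theorem lemma4p3:
  fixes p0 :: real and p :: "'n::{finite,linorder} \<Rightarrow> real" and f :: "real^('n::{finite,linorder}) \<Rightarrow> real"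
  assumes "1 < p0" and "\<forall>i. 1 < p i"
    and "real CARD('n) / p0 < (\<Sum>i\<in>UNIV. 1 / p i)"
    and "f \<in> block_space p0 p"
  shows "\<exists>(lam :: (real^('n::{finite,linorder})) set \<Rightarrow> real) (b :: (real^('n::{finite,linorder})) set \<Rightarrow> real^('n::{finite,linorder}) \<Rightarrow> real).
           (\<forall>Q\<in>dyadic_cubes. lam Q \<ge> 0) \<and>
           lam summable_on dyadic_cubes \<and>
           infsum lam dyadic_cubes \<le> 2 * 3 ^ CARD('n) * block_norm p0 p f \<and>
           (\<forall>k m. block_on p0 p (open_cube (dyadic_center k m) (3 * 2 powr (- k)))
                     (b (dyadic_cube k m))) \<and>
           (AE x in lborel. ((\<lambda>Q. lam Q * b Q x) has_sum f x) dyadic_cubes)"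
proof (cases "block_norm p0 p f = 0")
  case True
  then have "AE x in lborel. f x = 0"
    using assms by (intro AE_zero_if_block_norm_eq_0)
  then have "AE x in lborel. ((\<lambda>Q. 0 * 0) has_sum f x) dyadic_cubes"
    by (rule eventually_mono) simp
  then show ?thesis
    using block_on_zero[OF assms(2)] True by (intro exI[of _ "\<lambda>_. 0"] exI[of _ "\<lambda>_ _. 0"]) auto
next
  case False
  with block_norm_nonneg[OF assms(4)] have "block_norm p0 p f < 2 * block_norm p0 p f"
    by simp
  then obtain lam b where "block_decomp p0 p f lam b" "(\<Sum>i. \<bar>lam i\<bar>) < 2 * block_norm p0 p f"
    using block_decomp_sum_less[OF assms(4)] by blast
  moreover from this(1) interpret block_decomposition p0 p f lam b
    using assms by unfold_locales
  obtain L B where "\<forall>Q\<in>dyadic_cubes. L Q \<ge> 0" "(L has_sum (3 ^ CARD('n) * (\<Sum>i. \<bar>lam i\<bar>))) dyadic_cubes"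
    "\<forall>k m. block_on p0 p (open_cube (dyadic_center k m) (3 * 2 powr (- k))) (B (dyadic_cube k m))"
    "AE x in lborel. ((\<lambda>Q. L Q * B Q x) has_sum f x) dyadic_cubes"
    using exists_dyadic_block_decomposition by blast
  ultimately show ?thesis
    by (intro exI[of _ L] exI[of _ B]) (auto simp: has_sum_imp_summable infsumI)
qed

end
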